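(* Let $\mathfrak{g}$ be a Leibniz algebra, $\mathfrak{b}$ a two-sided ideal of $\mathfrak{g}$, and $\mathfrak{a}=\mathfrak{g}/\mathfrak{b}$. Then there exist a Leibniz algebra $\mathfrak{q}$ and a two-sided ideal $\mathfrak{m}$ of $\mathfrak{q}$ such that: (a) $[\mathfrak{g},\mathfrak{g}]_{\mathrm{Lie}}\cap\mathfrak{b}\cong \mathfrak{q}/\mathfrak{m}$; (b) $\mathfrak{m}\cong\mathcal{M}^{\mathrm{Lie}}(\mathfrak{g})$; (c) $\mathcal{M}^{\mathrm{Lie}}(\mathfrak{a})$ is an epimorphic image of $\mathfrak{q}$.
   Context: Fix a field $\mathbb{K}$ with $\frac12\in\mathbb{K}$. A Leibniz algebra is a $\mathbb{K}$-vector space with a bilinear bracket satisfying $[x,[y,z]]=[[x,y],z]-[[x,z],y]$. For two-sided ideals $\mathfrak{m},\mathfrak{n}$, $[\mathfrak{m},\mathfrak{n}]_{\mathrm{Lie}}$ is the subspace spanned by all $[m,n]+[n,m]$, $m\in\mathfrak{m},n\in\mathfrak{n}$. For a Leibniz algebra $\mathfrak{g}$ with a free presentation $0\to\mathfrak{r}\to\mathfrak{f}\to\mathfrak{g}\to0$ ($\mathfrak{f}$ a free Leibniz algebra, $\mathfrak{r}$ the kernel), the Schur $\mathrm{Lie}$-multiplier is $\mathcal{M}^{\mathrm{Lie}}(\mathfrak{g})=\frac{\mathfrak{r}\cap[\mathfrak{f},\mathfrak{f}]_{\mathrm{Lie}}}{[\mathfrak{f},\mathfrak{r}]_{\mathrm{Lie}}}$;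 up to isomorphism it does not depend on the chosen free presentation. *)

theory Defs
  imports Main
begin

record ('k, 'a) leib =
  lcarrier :: "'a set"
  lzero :: 'a
  ladd :: "'a \<Rightarrow> 'a \<Rightarrow> 'a"
  lsmult :: "'k \<Rightarrow> 'a \<Rightarrow> 'a"
  lbr :: "'a \<Rightarrow> 'a \<Rightarrow> 'a"

definition vector_space_on :: "('k::field, 'a) leib \<Rightarrow> bool" where
  "vector_space_on L \<longleftrightarrow>
     lzero L \<in> lcarrier L \<and>
     (\<forall>x\<in>lcarrier L. \<forall>y\<in>lcarrier L. ladd L x y \<in> lcarrier L) \<and>
     (\<forall>c. \<forall>x\<in>lcarrier L. lsmult L c x \<in> lcarrier L) \<and>
     (\<forall>x\<in>lcarrier L. \<forall>y\<in>lcarrier L. \<forall>z\<in>lcarrier L.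
        ladd L (ladd L x y) z = ladd L x (ladd L y z)) \<and>
     (\<forall>x\<in>lcarrier L. \<forall>y\<in>lcarrier L. ladd L x y = ladd L y x) \<and>
     (\<forall>x\<in>lcarrier L. ladd L (lzero L) x = x) \<and>
     (\<forall>x\<in>lcarrier L. ladd L x (lsmult L (-1) x) = lzero L) \<and>
     (\<forall>x\<in>lcarrier L. lsmult L 1 x = x) \<and>
     (\<forall>a b. \<forall>x\<in>lcarrier L. lsmult L a (lsmult L b x) = lsmult L (a * b) x) \<and>
     (\<forall>a b. \<forall>x\<in>lcarrier L. lsmult L (a + b) x = ladd L (lsmult L a x) (lsmult L b x)) \<and>
     (\<forall>a. \<forall>x\<in>lcarrier L. \<forall>y\<in>lcarrier L.
        lsmult L a (ladd L x y) = ladd L (lsmult L a x) (lsmult L a y))"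

definition leibniz :: "('k::field, 'a) leib \<Rightarrow> bool" where
  "leibniz L \<longleftrightarrow> vector_space_on L \<and>
     (\<forall>x\<in>lcarrier L. \<forall>y\<in>lcarrier L. lbr L x y \<in> lcarrier L) \<and>
     (\<forall>x\<in>lcarrier L. \<forall>y\<in>lcarrier L. \<forall>z\<in>lcarrier L.
        lbr L (ladd L x y) z = ladd L (lbr L x z) (lbr L y z) \<and>
        lbr L z (ladd L x y) = ladd L (lbr L z x) (lbr L z y)) \<and>
     (\<forall>c. \<forall>x\<in>lcarrier L. \<forall>y\<in>lcarrier L.
        lbr L (lsmult L c x) y = lsmult L c (lbr L x y) \<and>
        lbr L x (lsmult L c y) = lsmult L c (lbr L x y)) \<and>
     (\<forall>x\<in>lcarrier L. \<forall>y\<in>lcarrier L. \<forall>z\<in>lcarrier L.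
        lbr L x (lbr L y z) =
          ladd L (lbr L (lbr L x y) z) (lsmult L (-1) (lbr L (lbr L x z) y)))"

definition subspace :: "('k::field, 'a) leib \<Rightarrow> 'a set \<Rightarrow> bool" where
  "subspace L S \<longleftrightarrow> S \<subseteq> lcarrier L \<and> lzero L \<in> S \<and>
     (\<forall>x\<in>S. \<forall>y\<in>S. ladd L x y \<in> S) \<and> (\<forall>c. \<forall>x\<in>S. lsmult L c x \<in> S)"

definition ideal :: "('k::field, 'a) leib \<Rightarrow> 'a set \<Rightarrow> bool" where
  "ideal L I \<longleftrightarrow> subspace L I \<and>
     (\<forall>x\<in>lcarrier L. \<forall>i\<in>I. lbr L x i \<in> I \<and> lbr L i x \<in> I)"

definition lspan :: "('k::field, 'a) leib \<Rightarrow> 'a set \<Rightarrow> 'a set" where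
  "lspan L S = \<Inter>{T. subspace L T \<and> S \<subseteq> T}"

definition lie_br :: "('k::field, 'a) leib \<Rightarrow> 'a set \<Rightarrow> 'a set \<Rightarrow> 'a set" where
  "lie_br L M N = lspan L {ladd L (lbr L m n) (lbr L n m) | m n. m \<in> M \<and> n \<in> N}"

definition subalg :: "('k, 'a) leib \<Rightarrow> 'a set \<Rightarrow> ('k, 'a) leib" where
  "subalg L S = L\<lparr>lcarrier := S\<rparr>"

definition coset :: "('k, 'a) leib \<Rightarrow> 'a set \<Rightarrow> 'a \<Rightarrow> 'a set" where
  "coset L I x = {y \<in> lcarrier L. \<exists>i\<in>I. y = ladd L x i}"

definition quot :: "('k, 'a) leib \<Rightarrow> 'a set \<Rightarrow> ('k, 'a set) leib" where
  "quot L I = \<lparr> lcarrier = coset L I ` lcarrier L,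
               lzero = coset L I (lzero L),
               ladd = (\<lambda>X Y. coset L I (ladd L (SOME x. x \<in> X) (SOME y. y \<in> Y))),
               lsmult = (\<lambda>c X. coset L I (lsmult L c (SOME x. x \<in> X))),
               lbr = (\<lambda>X Y. coset L I (lbr L (SOME x. x \<in> X) (SOME y. y \<in> Y))) \<rparr>"

definition hom :: "('k, 'a) leib \<Rightarrow> ('k, 'b) leib \<Rightarrow> ('a \<Rightarrow> 'b) \<Rightarrow> bool" where
  "hom L1 L2 f \<longleftrightarrow>
     (\<forall>x\<in>lcarrier L1. f x \<in> lcarrier L2) \<and>
     (\<forall>x\<in>lcarrier L1. \<forall>y\<in>lcarrier L1. f (ladd L1 x y) = ladd L2 (f x) (f y)) \<and>
     (\<forall>c. \<forall>x\<in>lcarrier L1. f (lsmult L1 c x) = lsmult L2 c (f x)) \<and>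
     (\<forall>x\<in>lcarrier L1. \<forall>y\<in>lcarrier L1. f (lbr L1 x y) = lbr L2 (f x) (f y))"

definition isomorphic :: "('k, 'a) leib \<Rightarrow> ('k, 'b) leib \<Rightarrow> bool" where
  "isomorphic L1 L2 \<longleftrightarrow> (\<exists>f. hom L1 L2 f \<and> bij_betw f (lcarrier L1) (lcarrier L2))"

definition epimorphic_image :: "('k, 'b) leib \<Rightarrow> ('k, 'a) leib \<Rightarrow> bool" where
  "epimorphic_image L2 L1 \<longleftrightarrow> (\<exists>f. hom L1 L2 f \<and> f ` lcarrier L1 = lcarrier L2)"

text \<open>Elements: finitely supported K-linear combinations of nonempty words over X.
  Bracket on words: [u,v] = u v for a letter v, and [u, w v] = [u,w] v - [u v, w].\<close>

definition single_word :: "'x list \<Rightarrow> ('x list \<Rightarrow> 'k::field)" where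
  "single_word u = (\<lambda>w. if w = u then 1 else 0)"

definition append_letter :: "'x \<Rightarrow> ('x list \<Rightarrow> 'k::field) \<Rightarrow> ('x list \<Rightarrow> 'k)" where
  "append_letter v c = (\<lambda>w. if w \<noteq> [] \<and> last w = v then c (butlast w) else 0)"

text \<open>wbr_rev u ys = [u, rev ys] for words u and rev ys.\<close>
fun wbr_rev :: "'x list \<Rightarrow> 'x list \<Rightarrow> ('x list \<Rightarrow> 'k::field)" where
  "wbr_rev u [] = (\<lambda>_. 0)"
| "wbr_rev u [v] = single_word (u @ [v])"
| "wbr_rev u (v # y # ys) =
     (\<lambda>w. append_letter v (wbr_rev u (y # ys)) w - wbr_rev (u @ [v]) (y # ys) w)"

definition wbr :: "'x list \<Rightarrow> 'x list \<Rightarrow> ('x list \<Rightarrow> 'k::field)" where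
  "wbr u w = wbr_rev u (rev w)"

definition supp :: "('x list \<Rightarrow> 'k::field) \<Rightarrow> 'x list set" where
  "supp a = {w. a w \<noteq> 0}"

definition free_leib :: "'x set \<Rightarrow> ('k::field, 'x list \<Rightarrow> 'k) leib" where
  "free_leib X = \<lparr> lcarrier = {a. finite (supp a) \<and> (\<forall>w\<in>supp a. w \<noteq> [] \<and> set w \<subseteq> X)},
                  lzero = (\<lambda>_. 0),
                  ladd = (\<lambda>a b w. a w + b w),
                  lsmult = (\<lambda>c a w. c * a w),
                  lbr = (\<lambda>a b w. \<Sum>u\<in>supp a. \<Sum>v\<in>supp b. a u * b v * wbr u v w) \<rparr>"

text \<open>The canonical presentation: f = free Leibniz algebra on the underlying set of g,
  with the homomorphism f -> g sending each generator [x] to x; r is its kernel.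
  M^Lie(g) = (r \<inter> [f,f]_Lie) / [f,r]_Lie.\<close>
definition canon_pres :: "('k::field, 'a) leib \<Rightarrow> ('a list \<Rightarrow> 'k) \<Rightarrow> 'a" where
  "canon_pres g = (SOME \<phi>. hom (free_leib (lcarrier g)) g \<phi> \<and>
                     (\<forall>x\<in>lcarrier g. \<phi> (single_word [x]) = x))"

definition schur_lie :: "('k::field, 'a) leib \<Rightarrow> ('k, ('a list \<Rightarrow> 'k) set) leib" where
  "schur_lie g =
     (let f = free_leib (lcarrier g);
          r = {a \<in> lcarrier f. canon_pres g a = lzero g}
      in quot (subalg f (r \<inter> lie_br f (lcarrier f) (lcarrier f))) (lie_br f (lcarrier f) r))"

end

theory Submission
  imports Defs "HOL-Library.Function_Algebras"
begin

text \<open>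
  The Leibniz identity gives \<open>[z, [x,y] + [y,x]] = 0\<close>, so the Lie commutator \<open>[L,L]\<^sub>L\<^sub>i\<^sub>e\<close> is
  annihilated from the left; hence every subspace of \<open>[L,L]\<^sub>L\<^sub>i\<^sub>e\<close> is an abelian subalgebra
  in which every subspace is an ideal.

  Let \<open>c : f \<rightarrow> g\<close> be the canonical free presentation with kernel \<open>r\<close>, let \<open>s = c\<^sup>-\<^sup>1(b)\<close>,
  \<open>q = (s \<inter> [f,f]\<^sub>L\<^sub>i\<^sub>e) / [f,r]\<^sub>L\<^sub>i\<^sub>e\<close> and \<open>m = (r \<inter> [f,f]\<^sub>L\<^sub>i\<^sub>e) / [f,r]\<^sub>L\<^sub>i\<^sub>e\<close>,
  which is \<open>M\<^sup>L\<^sup>i\<^sup>e(g)\<close> by definition. Two elements of \<open>s \<inter> [f,f]\<^sub>L\<^sub>i\<^sub>e\<close> are congruent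
  modulo \<open>m\<close> iff they have the same image under \<open>c\<close>, and \<open>c\<close> maps \<open>[f,f]\<^sub>L\<^sub>i\<^sub>e\<close> onto
  \<open>[g,g]\<^sub>L\<^sub>i\<^sub>e\<close>; this gives \<open>q/m \<cong> [g,g]\<^sub>L\<^sub>i\<^sub>e \<inter> b\<close>. Finally the projection \<open>g \<rightarrow> g/b\<close>
  lifts to a surjection \<open>\<psi>\<close> from \<open>f\<close> onto the free algebra \<open>f'\<close> of the canonical presentation
  \<open>c'\<close> of \<open>g/b\<close>. It maps \<open>s\<close> into \<open>r' = ker c'\<close>, \<open>[f,r]\<^sub>L\<^sub>i\<^sub>e\<close> into \<open>[f',r']\<^sub>L\<^sub>i\<^sub>e\<close> and
  \<open>[f,f]\<^sub>L\<^sub>i\<^sub>e\<close> onto \<open>[f',f']\<^sub>L\<^sub>i\<^sub>e\<close>, so it induces a surjection \<open>q \<rightarrow> M\<^sup>L\<^sup>i\<^sup>e(g/b)\<close>.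
\<close>

section \<open>Finite linear combinations of words\<close>

definition lincomb :: "('x list \<Rightarrow> 'k::field) \<Rightarrow> ('x list \<Rightarrow> 'x list \<Rightarrow> 'k) \<Rightarrow> 'x list \<Rightarrow> 'k" where
  "lincomb a F = (\<lambda>w. \<Sum>u\<in>supp a. a u * F u w)"

abbreviation finsupp :: "('x list \<Rightarrow> 'k::field) \<Rightarrow> bool" where
  "finsupp a \<equiv> finite (supp a)"

lemma supp_iff[simp]: "u \<in> supp a \<longleftrightarrow> a u \<noteq> 0" by (simp add: supp_def)

lemma lincomb_superset:
  assumes "finite S" "supp a \<subseteq> S"
  shows "lincomb a F w = (\<Sum>u\<in>S. a u * F u w)"
  unfolding lincomb_def using assms
  by (intro sum.mono_neutral_left) auto

lemma supp_add: "supp (a + b) \<subseteq> supp a \<union> supp b" by (auto simp: supp_def)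
lemma supp_diff: "supp (a - b) \<subseteq> supp a \<union> supp b" by (auto simp: supp_def)
lemma supp_smult: "supp (\<lambda>w. c * a w) \<subseteq> supp a" by (auto simp: supp_def)
lemma supp_zero[simp]: "supp (0::'x list \<Rightarrow> 'k::field) = {}" by (auto simp: supp_def)

lemma finsupp_add: "finsupp a \<Longrightarrow> finsupp b \<Longrightarrow> finsupp (a + b)" by (meson finite_UnI finite_subset supp_add)
lemma finsupp_smult: "finsupp a \<Longrightarrow> finsupp (\<lambda>w. c * a w)" by (rule finite_subset[OF supp_smult])

lemma lincomb_add1: "finsupp a \<Longrightarrow> finsupp b \<Longrightarrow> lincomb (a + b) F = lincomb a F + lincomb b F"
proof (rule ext)
  fix w assume a: "finsupp a" "finsupp b"
  let ?S = "supp a \<union> supp b"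
  have "lincomb (a + b) F w = (\<Sum>u\<in>?S. (a+b) u * F u w)" using a supp_add by (intro lincomb_superset) auto
  also have "\<dots> = (\<Sum>u\<in>?S. a u * F u w) + (\<Sum>u\<in>?S. b u * F u w)"
    by (simp add: distrib_right sum.distrib)
  also have "\<dots> = lincomb a F w + lincomb b F w" using a by (subst (1 2) lincomb_superset[of ?S]) auto
  finally show "lincomb (a + b) F w = (lincomb a F + lincomb b F) w" by simp
qed

lemma lincomb_diff1: "finsupp a \<Longrightarrow> finsupp b \<Longrightarrow> lincomb (a - b) F = lincomb a F - lincomb b F"
proof (rule ext)
  fix w assume a: "finsupp a" "finsupp b"
  let ?S = "supp a \<union> supp b"
  have "lincomb (a - b) F w = (\<Sum>u\<in>?S. (a-b) u * F u w)" using a supp_diff by (intro lincomb_superset) auto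
  also have "\<dots> = (\<Sum>u\<in>?S. a u * F u w) - (\<Sum>u\<in>?S. b u * F u w)"
    by (simp add: left_diff_distrib sum_subtractf)
  also have "\<dots> = lincomb a F w - lincomb b F w" using a by (subst (1 2) lincomb_superset[of ?S]) auto
  finally show "lincomb (a - b) F w = (lincomb a F - lincomb b F) w" by simp
qed

lemma lincomb_smult1: "finsupp a \<Longrightarrow> lincomb (\<lambda>w. c * a w) F = (\<lambda>w. c * lincomb a F w)"
proof (rule ext)
  fix w assume a: "finsupp a"
  have "lincomb (\<lambda>w. c * a w) F w = (\<Sum>u\<in>supp a. c * a u * F u w)" using a supp_smult by (intro lincomb_superset) auto
  also have "\<dots> = c * lincomb a F w" by (simp add: lincomb_def sum_distrib_left mult.assoc)
  finally show "lincomb (\<lambda>w. c * a w) F w = c * lincomb a F w" .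
qed

lemma lincomb_add2: "lincomb a (\<lambda>u. F u + G u) = lincomb a F + lincomb a G"
  by (rule ext) (simp add: lincomb_def distrib_left sum.distrib)
lemma lincomb_diff2: "lincomb a (\<lambda>u. F u - G u) = lincomb a F - lincomb a G"
  by (rule ext) (simp add: lincomb_def right_diff_distrib sum_subtractf)
lemma lincomb_cong2: "(\<And>u. u \<in> supp a \<Longrightarrow> F u = G u) \<Longrightarrow> lincomb a F = lincomb a G"
  by (rule ext) (simp add: lincomb_def)

lemma supp_single: "supp (single_word u :: _ \<Rightarrow> 'k::field) = {u}"
  by (auto simp: supp_def single_word_def)

lemma lincomb_single: "lincomb (single_word u) F = F u"
  unfolding lincomb_def supp_single by (rule ext) (simp add: single_word_def)

lemma lincomb_decomp: "finsupp a \<Longrightarrow> lincomb a single_word = a"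
proof (rule ext)
  fix w assume "finsupp a"
  show "lincomb a single_word w = a w"
  proof (cases "w \<in> supp a")
    case True
    have "lincomb a single_word w = (\<Sum>u\<in>supp a. if u = w then a u else 0)"
      unfolding lincomb_def by (intro sum.cong) (auto simp: single_word_def)
    also have "\<dots> = a w" using True \<open>finsupp a\<close> by (simp add: sum.delta)
    finally show ?thesis .
  next
    case False
    have "lincomb a single_word w = (\<Sum>u\<in>supp a. 0)"
      unfolding lincomb_def using False by (intro sum.cong) (auto simp: single_word_def)
    then show ?thesis using False by simp
  qed
qed

lemma supp_lincomb: "supp (lincomb a F) \<subseteq> (\<Union>u\<in>supp a. supp (F u))"
proof
  fix w assume "w \<in> supp (lincomb a F)"
  then have "(\<Sum>u\<in>supp a. a u * F u w) \<noteq> 0" by (simp add: lincomb_def)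
  then obtain u where "u \<in> supp a" "a u * F u w \<noteq> 0" by (meson sum.neutral)
  then show "w \<in> (\<Union>u\<in>supp a. supp (F u))" by auto
qed

lemma finsupp_lincomb: "finsupp a \<Longrightarrow> (\<And>u. u \<in> supp a \<Longrightarrow> finsupp (F u)) \<Longrightarrow> finsupp (lincomb a F)"
  by (rule finite_subset[OF supp_lincomb]) auto

lemma lincomb_lincomb:
  assumes "finsupp a" "\<And>u. u \<in> supp a \<Longrightarrow> finsupp (F u)"
  shows "lincomb (lincomb a F) G = lincomb a (\<lambda>u. lincomb (F u) G)"
proof (rule ext)
  fix w
  let ?V = "\<Union>u\<in>supp a. supp (F u)"
  have fV: "finite ?V" using assms by auto
  have "lincomb (lincomb a F) G w = (\<Sum>v\<in>?V. lincomb a F v * G v w)"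
    using fV supp_lincomb by (intro lincomb_superset) auto
  also have "\<dots> = (\<Sum>v\<in>?V. \<Sum>u\<in>supp a. a u * F u v * G v w)"
    by (simp add: lincomb_def sum_distrib_right)
  also have "\<dots> = (\<Sum>u\<in>supp a. \<Sum>v\<in>?V. a u * F u v * G v w)"
    by (rule sum.swap)
  also have "\<dots> = (\<Sum>u\<in>supp a. a u * (\<Sum>v\<in>?V. F u v * G v w))"
    by (simp add: sum_distrib_left mult.assoc)
  also have "\<dots> = (\<Sum>u\<in>supp a. a u * lincomb (F u) G w)"
    using fV by (intro sum.cong refl arg_cong[where f="\<lambda>x. _ * x"] lincomb_superset[symmetric]) auto
  also have "\<dots> = lincomb a (\<lambda>u. lincomb (F u) G) w" by (simp add: lincomb_def)
  finally show "lincomb (lincomb a F) G w = lincomb a (\<lambda>u. lincomb (F u) G) w" .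
qed

lemma lincomb_swap: "lincomb a (\<lambda>u. lincomb b (H u)) = lincomb b (\<lambda>v. lincomb a (\<lambda>u. H u v))"
proof (rule ext)
  fix w
  have "lincomb a (\<lambda>u. lincomb b (H u)) w = (\<Sum>u\<in>supp a. \<Sum>v\<in>supp b. a u * (b v * H u v w))"
    by (simp add: lincomb_def sum_distrib_left)
  also have "\<dots> = (\<Sum>v\<in>supp b. \<Sum>u\<in>supp a. a u * (b v * H u v w))" by (rule sum.swap)
  also have "\<dots> = (\<Sum>v\<in>supp b. b v * (\<Sum>u\<in>supp a. a u * H u v w))"
    by (simp add: sum_distrib_left mult.left_commute)
  also have "\<dots> = lincomb b (\<lambda>v. lincomb a (\<lambda>u. H u v)) w" by (simp add: lincomb_def)
  finally show "lincomb a (\<lambda>u. lincomb b (H u)) w = lincomb b (\<lambda>v. lincomb a (\<lambda>u. H u v)) w" .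
qed

lemma wbr_letter: "wbr u [v] = single_word (u @ [v])" by (simp add: wbr_def)
lemma wbr_snoc:
  assumes "w0 \<noteq> []"
  shows "wbr u (w0 @ [v]) = append_letter v (wbr u w0) - wbr (u @ [v]) w0"
proof -
  obtain y ys where r: "rev w0 = y # ys" using assms by (cases "rev w0") auto
  show ?thesis unfolding wbr_def using r by (simp add: fun_eq_iff)
qed

lemma wbr_rev_supp:
  "wbr_rev u ys x \<noteq> (0::'k::field) \<Longrightarrow> length x = length u + length ys \<and> set x \<subseteq> set u \<union> set ys"
proof (induction u ys arbitrary: x rule: wbr_rev.induct)
  case (1 u) then show ?case by simp
next
  case (2 u v) then show ?case by (auto simp: single_word_def split: if_splits)
next
  case (3 u v y ys)
  have "append_letter v (wbr_rev u (y # ys)) x \<noteq> (0::'k) \<or> wbr_rev (u @ [v]) (y # ys) x \<noteq> (0::'k)"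
    using "3.prems" by (cases "append_letter v (wbr_rev u (y # ys)) x = (0::'k)") auto
  then show ?case
  proof
    assume h: "append_letter v (wbr_rev u (y # ys)) x \<noteq> (0::'k)"
    then have x: "x \<noteq> []" "last x = v" "wbr_rev u (y # ys) (butlast x) \<noteq> (0::'k)"
      by (auto simp: append_letter_def split: if_splits)
    from "3.IH"(1)[OF x(3)] have i: "length (butlast x) = length u + length (y # ys)"
       "set (butlast x) \<subseteq> set u \<union> set (y # ys)" by auto
    have xe: "x = butlast x @ [v]" using x by (metis append_butlast_last_id)
    have "length x = length (butlast x) + 1" "set x = set (butlast x) \<union> {v}"
      by (subst xe, simp)+
    then show ?thesis using i by auto
  next
    assume "wbr_rev (u @ [v]) (y # ys) x \<noteq> (0::'k)"
    from "3.IH"(2)[OF this] show ?thesis by auto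
  qed
qed

lemma wbr_supp: "x \<in> supp (wbr u w :: _ \<Rightarrow> 'k::field) \<Longrightarrow> length x = length u + length w \<and> set x \<subseteq> set u \<union> set w"
  using wbr_rev_supp[of u "rev w" x] unfolding wbr_def supp_iff by simp

lemma finsupp_wbr: "finsupp (wbr u w :: _ \<Rightarrow> 'k::field)"
proof -
  have "supp (wbr u w :: _ \<Rightarrow> 'k) \<subseteq> {xs. set xs \<subseteq> set u \<union> set w \<and> length xs = length u + length w}"
    using wbr_supp by blast
  moreover have "finite {xs. set xs \<subseteq> set u \<union> set w \<and> length xs = length u + length w}"
    by (rule finite_lists_length_eq) simp
  ultimately show ?thesis by (rule finite_subset)
qed

lemma finsupp_single: "finsupp (single_word u)" by (simp add: supp_single)

lemma append_letter_lincomb: "finsupp c \<Longrightarrow> append_letter v c = lincomb c (\<lambda>u. single_word (u @ [v]))"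
proof (rule ext)
  fix w assume c: "finsupp c"
  show "append_letter v c w = lincomb c (\<lambda>u. single_word (u @ [v])) w"
  proof (cases "w \<noteq> [] \<and> last w = v")
    case True
    then have w: "w = butlast w @ [v]" by (metis append_butlast_last_id)
    have "lincomb c (\<lambda>u. single_word (u @ [v])) w = (\<Sum>u\<in>supp c. if u = butlast w then c u else 0)"
      unfolding lincomb_def by (intro sum.cong refl) (use w in \<open>auto simp: single_word_def\<close>)
    also have "\<dots> = c (butlast w)" using c by (simp add: sum.delta')
    finally show ?thesis using True by (simp add: append_letter_def)
  next
    case False
    have "lincomb c (\<lambda>u. single_word (u @ [v])) w = (\<Sum>u\<in>supp c. 0)"
      unfolding lincomb_def by (intro sum.cong refl) (use False in \<open>auto simp: single_word_def\<close>)
    then show ?thesis using False by (auto simp: append_letter_def)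
  qed
qed

section \<open>The bracket of the free Leibniz algebra\<close>

definition fbr :: "('x list \<Rightarrow> 'k::field) \<Rightarrow> ('x list \<Rightarrow> 'k) \<Rightarrow> 'x list \<Rightarrow> 'k" where
  "fbr a b = lincomb a (\<lambda>u. lincomb b (wbr u))"

lemma lbr_free_leib: "lbr (free_leib X) = fbr"
  by (simp add: free_leib_def fbr_def lincomb_def fun_eq_iff sum_distrib_left mult.assoc)

lemma fbr_single2: "fbr x (single_word w) = lincomb x (\<lambda>u. wbr u w)"
  by (simp add: fbr_def lincomb_single)

lemma fbr_single1: "fbr (single_word u) y = lincomb y (wbr u)"
  by (simp add: fbr_def lincomb_single)

lemma supp_fbr: fixes a b :: "'x list \<Rightarrow> 'k::field"
  shows "supp (fbr a b) \<subseteq> (\<Union>u\<in>supp a. \<Union>v\<in>supp b. supp (wbr u v :: 'x list \<Rightarrow> 'k))"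
proof -
  have "supp (fbr a b) \<subseteq> (\<Union>u\<in>supp a. supp (lincomb b (wbr u)))" unfolding fbr_def by (rule supp_lincomb)
  also have "\<dots> \<subseteq> (\<Union>u\<in>supp a. \<Union>v\<in>supp b. supp (wbr u v :: _ \<Rightarrow> 'k))"
  proof (rule UN_mono[OF order_refl])
    fix u show "supp (lincomb b (wbr u)) \<subseteq> (\<Union>v\<in>supp b. supp (wbr u v :: _ \<Rightarrow> 'k))" using supp_lincomb[of b "wbr u"] .
  qed
  finally show ?thesis .
qed

lemma finsupp_fbr: "finsupp a \<Longrightarrow> finsupp b \<Longrightarrow> finsupp (fbr a b)"
  by (rule finite_subset[OF supp_fbr]) (auto simp: finsupp_wbr)

lemma fbr_lincomb1:
  assumes "finsupp a" "\<And>u. u \<in> supp a \<Longrightarrow> finsupp (F u)"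
  shows "fbr (lincomb a F) c = lincomb a (\<lambda>u. fbr (F u) c)"
  unfolding fbr_def using assms by (rule lincomb_lincomb)

lemma fbr_lincomb2:
  assumes "finsupp a" "\<And>u. u \<in> supp a \<Longrightarrow> finsupp (F u)"
  shows "fbr x (lincomb a F) = lincomb a (\<lambda>u. fbr x (F u))"
proof -
  have "\<And>u'. lincomb (lincomb a F) (wbr u') = lincomb a (\<lambda>u. lincomb (F u) (wbr u'))"
    using assms by (rule lincomb_lincomb)
  then have "fbr x (lincomb a F) = lincomb x (\<lambda>u'. lincomb a (\<lambda>u. lincomb (F u) (wbr u')))"
    unfolding fbr_def by simp
  also have "\<dots> = lincomb a (\<lambda>u. lincomb x (\<lambda>u'. lincomb (F u) (wbr u')))" by (rule lincomb_swap)
  finally show ?thesis by (simp add: fbr_def)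
qed

lemma fbr_decomp2: "finsupp y \<Longrightarrow> lincomb y (\<lambda>u. fbr z (single_word u)) = fbr z y"
  using fbr_lincomb2[of y single_word z] by (simp add: lincomb_decomp finsupp_single)

lemma fbr_add1: "finsupp a \<Longrightarrow> finsupp b \<Longrightarrow> fbr (a + b) c = fbr a c + fbr b c"
  by (simp add: fbr_def lincomb_add1)
lemma fbr_diff1: "finsupp a \<Longrightarrow> finsupp b \<Longrightarrow> fbr (a - b) c = fbr a c - fbr b c"
  by (simp add: fbr_def lincomb_diff1)
lemma fbr_smult1: "finsupp a \<Longrightarrow> fbr (\<lambda>w. k * a w) c = (\<lambda>w. k * fbr a c w)"
  by (simp add: fbr_def lincomb_smult1)
lemma fbr_add2: "finsupp a \<Longrightarrow> finsupp b \<Longrightarrow> fbr c (a + b) = fbr c a + fbr c b"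
  by (simp add: fbr_def lincomb_add1 lincomb_add2)
lemma fbr_diff2: "finsupp a \<Longrightarrow> finsupp b \<Longrightarrow> fbr c (a - b) = fbr c a - fbr c b"
  by (simp add: fbr_def lincomb_diff1 lincomb_diff2)
lemma fbr_smult2: "finsupp a \<Longrightarrow> fbr c (\<lambda>w. k * a w) = (\<lambda>w. k * fbr c a w)"
proof -
  assume a: "finsupp a"
  have "fbr c (\<lambda>w. k * a w) = lincomb c (\<lambda>u w. k * lincomb a (wbr u) w)"
    unfolding fbr_def using a by (simp add: lincomb_smult1)
  also have "\<dots> = (\<lambda>w. k * fbr c a w)"
    by (simp add: fbr_def lincomb_def fun_eq_iff sum_distrib_left mult.left_commute)
  finally show ?thesis .
qed

text \<open>The empty word is excluded from the free algebra: it would act as a left unit for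
  \<open>wbr\<close> and violate the Leibniz identity.\<close>

definition reduced :: "('x list \<Rightarrow> 'k::field) \<Rightarrow> bool" where
  "reduced a \<longleftrightarrow> finsupp a \<and> [] \<notin> supp a"

lemma reduced_fbr: fixes a b :: "'x list \<Rightarrow> 'k::field"
  shows "finsupp a \<Longrightarrow> reduced b \<Longrightarrow> reduced (fbr a b)"
proof -
  assume a: "finsupp a" "reduced b"
  have "[] \<notin> supp (fbr a b)"
  proof
    assume "[] \<in> supp (fbr a b)"
    then obtain u v where "v \<in> supp b" "[] \<in> supp (wbr u v :: _ \<Rightarrow> 'k)" using supp_fbr[of a b] by blast
    then show False using wbr_supp[of "[]" u v] a(2) unfolding reduced_def by auto
  qed
  then show ?thesis using a finsupp_fbr unfolding reduced_def by blast
qed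

lemma reduced_single: "w \<noteq> [] \<Longrightarrow> reduced (single_word w)"
  by (simp add: reduced_def supp_single)

lemma reduced_wbr: "v \<noteq> [] \<Longrightarrow> reduced (wbr u v :: _ \<Rightarrow> 'k::field)"
  using wbr_supp[of "[]" u v] finsupp_wbr[of u v] by (auto simp: reduced_def)

lemma reduced_finsupp: "reduced a \<Longrightarrow> finsupp a" by (simp add: reduced_def)

lemma fbr_single_snoc:
  assumes y: "finsupp y" and w0: "w0 \<noteq> []"
  shows "fbr y (single_word (w0 @ [v])) =
     fbr (fbr y (single_word w0)) (single_word [v]) - fbr (fbr y (single_word [v])) (single_word w0)"
proof -
  have "fbr y (single_word (w0 @ [v])) = lincomb y (\<lambda>u. append_letter v (wbr u w0) - wbr (u @ [v]) w0)"
    by (simp add: fbr_single2 wbr_snoc[OF w0])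
  also have "\<dots> = lincomb y (\<lambda>u. append_letter v (wbr u w0)) - lincomb y (\<lambda>u. wbr (u @ [v]) w0)"
    by (rule lincomb_diff2)
  also have "lincomb y (\<lambda>u. append_letter v (wbr u w0)) = fbr (fbr y (single_word w0)) (single_word [v])"
    using y by (simp add: fbr_single2 wbr_letter lincomb_lincomb finsupp_wbr append_letter_lincomb)
  also have "lincomb y (\<lambda>u. wbr (u @ [v]) w0) = fbr (fbr y (single_word [v])) (single_word w0)"
    using y by (simp add: fbr_single2 wbr_letter lincomb_lincomb finsupp_single lincomb_single)
  finally show ?thesis .
qed

lemma fbr_leibniz_letter:
  assumes x: "finsupp x" and y: "reduced y"
  shows "fbr x (fbr y (single_word [v])) =
     fbr (fbr x y) (single_word [v]) - fbr (fbr x (single_word [v])) y"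
proof -
  have fy: "finsupp y" using y reduced_finsupp by blast
  have "fbr x (fbr y (single_word [v])) = fbr x (lincomb y (\<lambda>u. single_word (u @ [v])))"
    using fy by (simp add: fbr_single2 wbr_letter)
  also have "\<dots> = lincomb y (\<lambda>u. fbr x (single_word (u @ [v])))"
    using fy by (simp add: fbr_lincomb2 finsupp_single)
  also have "\<dots> = lincomb y (\<lambda>u. fbr (fbr x (single_word u)) (single_word [v]) - fbr (fbr x (single_word [v])) (single_word u))"
    using y x by (intro lincomb_cong2 fbr_single_snoc) (auto simp: reduced_def)
  also have "\<dots> = lincomb y (\<lambda>u. fbr (fbr x (single_word u)) (single_word [v])) - lincomb y (\<lambda>u. fbr (fbr x (single_word [v])) (single_word u))"
    by (rule lincomb_diff2)
  also have "lincomb y (\<lambda>u. fbr (fbr x (single_word u)) (single_word [v])) = fbr (lincomb y (\<lambda>u. fbr x (single_word u))) (single_word [v])"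
    using fy x by (simp add: fbr_lincomb1 finsupp_fbr finsupp_single)
  also have "lincomb y (\<lambda>u. fbr x (single_word u)) = fbr x y" using fy by (rule fbr_decomp2)
  also have "lincomb y (\<lambda>u. fbr (fbr x (single_word [v])) (single_word u)) = fbr (fbr x (single_word [v])) y"
    using fy by (rule fbr_decomp2)
  finally show ?thesis .
qed

text \<open>Induction on the word: expand \<open>[y, w\<^sub>0 v]\<close> by \<open>fbr_single_snoc\<close>, then the letter case
  and the induction hypothesis rewrite all terms into brackets of \<open>x, y, w\<^sub>0, v\<close> that cancel.\<close>

lemma fbr_leibniz_single:
  fixes x y :: "'x list \<Rightarrow> 'k::field"
  assumes "w \<noteq> []"
  shows "finsupp x \<Longrightarrow> reduced y \<Longrightarrow> fbr x (fbr y (single_word w)) =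
     fbr (fbr x y) (single_word w) - fbr (fbr x (single_word w)) y"
  using assms
proof (induction w arbitrary: x y rule: rev_induct)
  case Nil then show ?case by simp
next
  case (snoc v w0)
  show ?case
  proof (cases "w0 = []")
    case True then show ?thesis by (simp only: True append_Nil) (rule fbr_leibniz_letter[OF snoc.prems(1,2)])
  next
    case False
    note IH = snoc.IH[OF _ _ False]
    have x: "finsupp x" and y: "reduced y" and fy: "finsupp y" using snoc.prems by (auto simp: reduced_def)
    let ?s = "single_word :: _ \<Rightarrow> _ \<Rightarrow> 'k"
    have fs: "finsupp (?s w)" for w by (rule finsupp_single)
    have nes: "reduced (?s w0)" "reduced (?s [v])" using False by (auto intro: reduced_single)
    have f1: "finsupp (fbr y (?s w0))" "finsupp (fbr y (?s [v]))" "finsupp (fbr x (?s w0))" "finsupp (fbr x (?s [v]))"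
      "finsupp (fbr x y)"
      using x fy fs by (auto intro: finsupp_fbr)
    have n1: "reduced (fbr y (?s w0))" "reduced (fbr y (?s [v]))" using fy nes by (auto intro: reduced_fbr)
    have L1: "fbr x (fbr y (?s (w0 @ [v]))) = fbr x (fbr (fbr y (?s w0)) (?s [v])) - fbr x (fbr (fbr y (?s [v])) (?s w0))"
      unfolding fbr_single_snoc[OF fy False] by (rule fbr_diff2) (simp_all add: finsupp_fbr f1 fs fy)
    have h1: "fbr x (fbr (fbr y (?s w0)) (?s [v])) = fbr (fbr x (fbr y (?s w0))) (?s [v]) - fbr (fbr x (?s [v])) (fbr y (?s w0))"
      by (rule fbr_leibniz_letter[OF x n1(1)])
    have h2: "fbr (fbr x (fbr y (?s w0))) (?s [v]) = fbr (fbr (fbr x y) (?s w0)) (?s [v]) - fbr (fbr (fbr x (?s w0)) y) (?s [v])"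
      unfolding IH[OF x y] by (rule fbr_diff1) (simp_all add: finsupp_fbr f1 fs fy)
    have h3: "fbr (fbr x (?s [v])) (fbr y (?s w0)) = fbr (fbr (fbr x (?s [v])) y) (?s w0) - fbr (fbr (fbr x (?s [v])) (?s w0)) y"
      by (rule IH[OF f1(4) y])
    have h4: "fbr x (fbr (fbr y (?s [v])) (?s w0)) = fbr (fbr x (fbr y (?s [v]))) (?s w0) - fbr (fbr x (?s w0)) (fbr y (?s [v]))"
      by (rule IH[OF x n1(2)])
    have h5: "fbr (fbr x (fbr y (?s [v]))) (?s w0) = fbr (fbr (fbr x y) (?s [v])) (?s w0) - fbr (fbr (fbr x (?s [v])) y) (?s w0)"
      unfolding fbr_leibniz_letter[OF x y] by (rule fbr_diff1) (simp_all add: finsupp_fbr f1 fs fy)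
    have h6: "fbr (fbr x (?s w0)) (fbr y (?s [v])) = fbr (fbr (fbr x (?s w0)) y) (?s [v]) - fbr (fbr (fbr x (?s w0)) (?s [v])) y"
      by (rule fbr_leibniz_letter[OF f1(3) y])
    have r1: "fbr (fbr x y) (?s (w0 @ [v])) = fbr (fbr (fbr x y) (?s w0)) (?s [v]) - fbr (fbr (fbr x y) (?s [v])) (?s w0)"
      by (rule fbr_single_snoc[OF f1(5) False])
    have r2: "fbr (fbr x (?s (w0 @ [v]))) y = fbr (fbr (fbr x (?s w0)) (?s [v])) y - fbr (fbr (fbr x (?s [v])) (?s w0)) y"
      unfolding fbr_single_snoc[OF x False] by (rule fbr_diff1) (simp_all add: finsupp_fbr f1 fs fy)
    show ?thesis unfolding L1 h1 h4 h2 h3 h5 h6 r1 r2 by (simp add: algebra_simps)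
  qed
qed

lemma fbr_leibniz:
  assumes x: "finsupp x" and y: "reduced y" and z: "reduced z"
  shows "fbr x (fbr y z) = fbr (fbr x y) z - fbr (fbr x z) y"
proof -
  have fy: "finsupp y" and fz: "finsupp z" using y z by (auto simp: reduced_def)
  have ne: "w \<in> supp z \<Longrightarrow> w \<noteq> []" for w using z by (auto simp: reduced_def)
  have "fbr x (fbr y z) = fbr x (lincomb z (\<lambda>w. fbr y (single_word w)))" using fz by (simp add: fbr_decomp2)
  also have "\<dots> = lincomb z (\<lambda>w. fbr x (fbr y (single_word w)))"
    using fz fy by (simp add: fbr_lincomb2 finsupp_fbr finsupp_single)
  also have "\<dots> = lincomb z (\<lambda>w. fbr (fbr x y) (single_word w) - fbr (fbr x (single_word w)) y)"
    using x y ne by (intro lincomb_cong2 fbr_leibniz_single) auto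
  also have "\<dots> = lincomb z (\<lambda>w. fbr (fbr x y) (single_word w)) - lincomb z (\<lambda>w. fbr (fbr x (single_word w)) y)"
    by (rule lincomb_diff2)
  also have "lincomb z (\<lambda>w. fbr (fbr x y) (single_word w)) = fbr (fbr x y) z" using fz by (rule fbr_decomp2)
  also have "lincomb z (\<lambda>w. fbr (fbr x (single_word w)) y) = fbr (lincomb z (\<lambda>w. fbr x (single_word w))) y"
    using fz x by (simp add: fbr_lincomb1 finsupp_fbr finsupp_single)
  also have "lincomb z (\<lambda>w. fbr x (single_word w)) = fbr x z" using fz by (rule fbr_decomp2)
  finally show ?thesis .
qed

section \<open>Vector spaces and Leibniz algebras with carriers\<close>

locale vspace =
  fixes L :: "('k::field, 'a) leib"
  assumes vector_space: "vector_space_on L"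
begin

abbreviation "carr \<equiv> lcarrier L"
abbreviation "add \<equiv> ladd L"
abbreviation "sm \<equiv> lsmult L"
abbreviation "zer \<equiv> lzero L"

definition sub :: "'a \<Rightarrow> 'a \<Rightarrow> 'a" where "sub x y = add x (sm (-1) y)"

lemma zero_closed[simp, intro]: "zer \<in> carr" using vector_space unfolding vector_space_on_def by auto
lemma add_closed[simp, intro]: "x \<in> carr \<Longrightarrow> y \<in> carr \<Longrightarrow> add x y \<in> carr" using vector_space unfolding vector_space_on_def by auto
lemma sm_closed[simp, intro]: "x \<in> carr \<Longrightarrow> sm c x \<in> carr" using vector_space unfolding vector_space_on_def by auto
lemma add_assoc: "x \<in> carr \<Longrightarrow> y \<in> carr \<Longrightarrow> w \<in> carr \<Longrightarrow> add (add x y) w = add x (add y w)"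
  using vector_space unfolding vector_space_on_def by meson
lemma add_comm: "x \<in> carr \<Longrightarrow> y \<in> carr \<Longrightarrow> add x y = add y x" using vector_space unfolding vector_space_on_def by auto
lemma zero_add[simp]: "x \<in> carr \<Longrightarrow> add zer x = x" using vector_space unfolding vector_space_on_def by auto
lemma add_neg: "x \<in> carr \<Longrightarrow> add x (sm (-1) x) = zer" using vector_space unfolding vector_space_on_def by auto
lemma sm_one[simp]: "x \<in> carr \<Longrightarrow> sm 1 x = x" using vector_space unfolding vector_space_on_def by auto
lemma sm_sm[simp]: "x \<in> carr \<Longrightarrow> sm a (sm b x) = sm (a * b) x" using vector_space unfolding vector_space_on_def by auto
lemma sm_add_scalar: "x \<in> carr \<Longrightarrow> sm (a + b) x = add (sm a x) (sm b x)" using vector_space unfolding vector_space_on_def by auto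
lemma sm_add_vec: "x \<in> carr \<Longrightarrow> y \<in> carr \<Longrightarrow> sm a (add x y) = add (sm a x) (sm a y)" using vector_space unfolding vector_space_on_def by auto

lemma add_zero[simp]: "x \<in> carr \<Longrightarrow> add x zer = x" by (metis add_comm zero_add zero_closed)

lemma add_left_comm: "x \<in> carr \<Longrightarrow> y \<in> carr \<Longrightarrow> w \<in> carr \<Longrightarrow> add x (add y w) = add y (add x w)"
  by (metis add_assoc add_comm)

lemma add_cancel_left:
  assumes "w \<in> carr" "x \<in> carr" "y \<in> carr" "add w x = add w y"
  shows "x = y"
proof -
  have "add (sm (-1) w) (add w x) = add (sm (-1) w) (add w y)" using assms by simp
  then show ?thesis using assms
    by (metis add_assoc add_comm add_neg sm_closed zero_add)
qed

lemma sm_zero[simp]: "x \<in> carr \<Longrightarrow> sm 0 x = zer"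
proof -
  assume x: "x \<in> carr"
  have "add (sm 0 x) (sm 0 x) = add (sm 0 x) zer" using sm_add_scalar[OF x, of 0 0] x by simp
  then show ?thesis using x add_cancel_left by blast
qed

lemma sm_zero_vec[simp]: "sm c zer = zer"
proof -
  have "add (sm c zer) (sm c zer) = add (sm c zer) zer" using sm_add_vec[of zer zer c] by simp
  then show ?thesis using add_cancel_left by blast
qed

lemma sub_closed[simp, intro]: "x \<in> carr \<Longrightarrow> y \<in> carr \<Longrightarrow> sub x y \<in> carr" by (simp add: sub_def)
lemma sub_self[simp]: "x \<in> carr \<Longrightarrow> sub x x = zer" by (simp add: sub_def add_neg)
lemma sub_zero[simp]: "x \<in> carr \<Longrightarrow> sub x zer = x" by (simp add: sub_def)

lemma add_sub_cancel: "x \<in> carr \<Longrightarrow> y \<in> carr \<Longrightarrow> add (sub x y) y = x"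
  unfolding sub_def by (metis add_assoc add_comm add_neg add_zero sm_closed)

lemma sub_add_cancel: "x \<in> carr \<Longrightarrow> y \<in> carr \<Longrightarrow> sub (add x y) y = x"
  unfolding sub_def by (simp add: add_assoc add_neg)

lemma sub_eq_zero_iff: "x \<in> carr \<Longrightarrow> y \<in> carr \<Longrightarrow> sub x y = zer \<longleftrightarrow> x = y"
  by (metis add_sub_cancel sub_self zero_add)

lemma eq_add_iff: "w \<in> carr \<Longrightarrow> x \<in> carr \<Longrightarrow> i \<in> carr \<Longrightarrow> w = add x i \<longleftrightarrow> i = sub w x"
  by (metis add_comm add_sub_cancel sub_add_cancel sub_closed)

lemma sub_trans: "w \<in> carr \<Longrightarrow> x \<in> carr \<Longrightarrow> y \<in> carr \<Longrightarrow> sub w x = add (sub w y) (sub y x)"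
  unfolding sub_def
  by (smt (verit, ccfv_threshold) add_assoc add_closed add_comm add_neg add_zero sm_closed)

lemma neg_sub: "x \<in> carr \<Longrightarrow> y \<in> carr \<Longrightarrow> sub x y = sm (-1) (sub y x)"
  unfolding sub_def by (simp add: sm_add_vec add_comm)

lemma sub_add_add: "a \<in> carr \<Longrightarrow> b \<in> carr \<Longrightarrow> c \<in> carr \<Longrightarrow> d \<in> carr \<Longrightarrow>
   sub (add a b) (add c d) = add (sub a c) (sub b d)"
  unfolding sub_def using sm_add_vec add_assoc add_left_comm by (simp add: sm_add_vec add_assoc add_left_comm)

lemma sub_sm: "a \<in> carr \<Longrightarrow> c \<in> carr \<Longrightarrow> sub (sm k a) (sm k c) = sm k (sub a c)"
  unfolding sub_def by (simp add: sm_add_vec mult.commute)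

lemma subspace_carr: "subspace L carr" by (auto simp: subspace_def)

lemma subspace_sub: "subspace L S \<Longrightarrow> x \<in> S \<Longrightarrow> y \<in> S \<Longrightarrow> sub x y \<in> S"
  by (simp add: subspace_def sub_def)

lemma subspace_sm: "subspace L S \<Longrightarrow> x \<in> S \<Longrightarrow> sm c x \<in> S" by (simp add: subspace_def)
lemma subspace_add: "subspace L S \<Longrightarrow> x \<in> S \<Longrightarrow> y \<in> S \<Longrightarrow> add x y \<in> S" by (simp add: subspace_def)
lemma subspace_zero: "subspace L S \<Longrightarrow> zer \<in> S" by (simp add: subspace_def)
lemma subspace_sub_carr: "subspace L S \<Longrightarrow> S \<subseteq> carr" by (simp add: subspace_def)

lemma sub_sub_mem: "subspace L S \<Longrightarrow> x \<in> carr \<Longrightarrow> y \<in> carr \<Longrightarrow> sub x y \<in> S \<Longrightarrow> sub y x \<in> S"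
  using neg_sub subspace_sm by metis

lemma lspan_subspace: "A \<subseteq> carr \<Longrightarrow> subspace L (lspan L A)"
  unfolding lspan_def subspace_def using subspace_carr[unfolded subspace_def]
  by (auto simp: subspace_def)

lemma lspan_sub: "A \<subseteq> lspan L A" unfolding lspan_def by blast
lemma lspan_min: "subspace L T \<Longrightarrow> A \<subseteq> T \<Longrightarrow> lspan L A \<subseteq> T" unfolding lspan_def by blast
lemma lspan_carr: "A \<subseteq> carr \<Longrightarrow> lspan L A \<subseteq> carr" using lspan_min subspace_carr by blast

text \<open>Finite sums in the carrier; the guard makes the folded step commute on every accumulator.\<close>
definition vsum :: "('b \<Rightarrow> 'a) \<Rightarrow> 'b set \<Rightarrow> 'a" where
  "vsum f A = Finite_Set.fold (\<lambda>x acc. if acc \<in> carr then add (f x) acc else acc) zer A"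

lemma vsum_step_commute: "comp_fun_commute_on {x. f x \<in> carr} (\<lambda>x acc. if acc \<in> carr then add (f x) acc else acc)"
  by unfold_locales (auto simp: fun_eq_iff add_left_comm)

lemma vsum_empty[simp]: "vsum f {} = zer" by (simp add: vsum_def)

lemma vsum_closed_insert:
  assumes "finite A" "f ` A \<subseteq> carr"
  shows "vsum f A \<in> carr \<and> (\<forall>x. f x \<in> carr \<longrightarrow> x \<notin> A \<longrightarrow> vsum f (insert x A) = add (f x) (vsum f A))"
  using assms
proof (induction A rule: finite_induct)
  case empty
  interpret comp_fun_commute_on "{x. f x \<in> carr}" "\<lambda>x acc. if acc \<in> carr then add (f x) acc else acc"
    by (rule vsum_step_commute)
  show ?case by (auto simp: vsum_def)
next
  case (insert y A)
  interpret comp_fun_commute_on "{x. f x \<in> carr}" "\<lambda>x acc. if acc \<in> carr then add (f x) acc else acc"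
    by (rule vsum_step_commute)
  have c: "vsum f A \<in> carr" using insert by auto
  have i: "vsum f (insert y A) = add (f y) (vsum f A)"
    using insert c unfolding vsum_def by (subst fold_insert) auto
  then have c2: "vsum f (insert y A) \<in> carr" using c insert by auto
  show ?case
  proof (intro conjI allI impI)
    fix x assume x: "f x \<in> carr" "x \<notin> insert y A"
    show "vsum f (insert x (insert y A)) = add (f x) (vsum f (insert y A))"
      using insert x c2 unfolding vsum_def by (subst fold_insert) auto
  qed (rule c2)
qed

lemma vsum_closed[simp, intro]: "finite A \<Longrightarrow> f ` A \<subseteq> carr \<Longrightarrow> vsum f A \<in> carr"
  using vsum_closed_insert by blast

lemma vsum_insert: "finite A \<Longrightarrow> f ` A \<subseteq> carr \<Longrightarrow> f x \<in> carr \<Longrightarrow> x \<notin> A \<Longrightarrow>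
   vsum f (insert x A) = add (f x) (vsum f A)"
  using vsum_closed_insert by blast

lemma vsum_insert2: "finite A \<Longrightarrow> x \<notin> A \<Longrightarrow> (\<And>y. y \<in> insert x A \<Longrightarrow> f y \<in> carr) \<Longrightarrow>
   vsum f (insert x A) = add (f x) (vsum f A)"
  by (rule vsum_insert) auto

lemma vsum_closed2[simp, intro]: "finite A \<Longrightarrow> (\<And>y. y \<in> A \<Longrightarrow> f y \<in> carr) \<Longrightarrow> vsum f A \<in> carr"
  by (rule vsum_closed) auto

lemma vsum_cong: "finite A \<Longrightarrow> f ` A \<subseteq> carr \<Longrightarrow> (\<And>x. x \<in> A \<Longrightarrow> f x = g x) \<Longrightarrow> vsum f A = vsum g A"
proof (induction A rule: finite_induct)
  case (insert x F)
  have "vsum f (insert x F) = add (f x) (vsum f F)" using insert by (intro vsum_insert) auto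
  also have "\<dots> = add (g x) (vsum g F)" using insert by auto
  also have "\<dots> = vsum g (insert x F)" using insert by (intro vsum_insert[symmetric]) auto
  finally show ?case .
qed simp

lemma vsum_zero: "finite A \<Longrightarrow> (\<And>x. x \<in> A \<Longrightarrow> f x = zer) \<Longrightarrow> vsum f A = zer"
proof (induction A rule: finite_induct)
  case (insert x F)
  then show ?case by (subst vsum_insert) auto
qed simp

lemma vsum_add: "finite A \<Longrightarrow> f ` A \<subseteq> carr \<Longrightarrow> g ` A \<subseteq> carr \<Longrightarrow>
   vsum (\<lambda>x. add (f x) (g x)) A = add (vsum f A) (vsum g A)"
proof (induction A rule: finite_induct)
  case (insert x F)
  then have "vsum (\<lambda>x. add (f x) (g x)) (insert x F) = add (add (f x) (g x)) (vsum (\<lambda>x. add (f x) (g x)) F)"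
    by (intro vsum_insert) auto
  also have "\<dots> = add (add (f x) (g x)) (add (vsum f F) (vsum g F))" using insert by simp
  also have "\<dots> = add (add (f x) (vsum f F)) (add (g x) (vsum g F))"
    using insert by (simp add: add_assoc add_left_comm)
  also have "\<dots> = add (vsum f (insert x F)) (vsum g (insert x F))"
    using insert by (simp add: vsum_insert)
  finally show ?case .
qed simp

lemma vsum_sm: "finite A \<Longrightarrow> f ` A \<subseteq> carr \<Longrightarrow> sm c (vsum f A) = vsum (\<lambda>x. sm c (f x)) A"
proof (induction A rule: finite_induct)
  case (insert x F)
  have "sm c (vsum f (insert x F)) = sm c (add (f x) (vsum f F))" using insert by (simp add: vsum_insert)
  also have "\<dots> = add (sm c (f x)) (vsum (\<lambda>x. sm c (f x)) F)" using insert by (simp add: sm_add_vec)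
  also have "\<dots> = vsum (\<lambda>x. sm c (f x)) (insert x F)" using insert by (intro vsum_insert[symmetric]) auto
  finally show ?case .
qed simp

lemma vsum_Un: "finite A \<Longrightarrow> finite B \<Longrightarrow> A \<inter> B = {} \<Longrightarrow> f ` (A \<union> B) \<subseteq> carr \<Longrightarrow>
   vsum f (A \<union> B) = add (vsum f A) (vsum f B)"
proof (induction A rule: finite_induct)
  case (insert x F)
  have "vsum f (insert x F \<union> B) = vsum f (insert x (F \<union> B))" by simp
  also have "\<dots> = add (f x) (vsum f (F \<union> B))" using insert by (intro vsum_insert) auto
  also have "\<dots> = add (f x) (add (vsum f F) (vsum f B))" using insert by auto
  also have "\<dots> = add (add (f x) (vsum f F)) (vsum f B)"
    using insert by (subst add_assoc) (auto intro!: vsum_closed2)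
  also have "add (f x) (vsum f F) = vsum f (insert x F)"
    using insert by (intro vsum_insert[symmetric]) auto
  finally show ?case .
qed simp

lemma vsum_superset: "finite B \<Longrightarrow> A \<subseteq> B \<Longrightarrow> f ` B \<subseteq> carr \<Longrightarrow> (\<And>x. x \<in> B - A \<Longrightarrow> f x = zer) \<Longrightarrow>
   vsum f A = vsum f B"
proof -
  assume a: "finite B" "A \<subseteq> B" "f ` B \<subseteq> carr" "\<And>x. x \<in> B - A \<Longrightarrow> f x = zer"
  have "B = A \<union> (B - A)" using a by auto
  then have "vsum f B = add (vsum f A) (vsum f (B - A))"
    using a by (metis Diff_disjoint finite_Diff finite_subset vsum_Un)
  also have "vsum f (B - A) = zer" using a by (intro vsum_zero) auto
  finally show ?thesis using a by (metis add_zero finite_subset vsum_closed image_mono order_trans)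
qed

lemma vsum_swap: "finite A \<Longrightarrow> finite B \<Longrightarrow> (\<And>x y. x \<in> A \<Longrightarrow> y \<in> B \<Longrightarrow> f x y \<in> carr) \<Longrightarrow>
  vsum (\<lambda>x. vsum (\<lambda>y. f x y) B) A = vsum (\<lambda>y. vsum (\<lambda>x. f x y) A) B"
proof (induction A rule: finite_induct)
  case empty then show ?case by (simp add: vsum_zero)
next
  case (insert a F)
  have "vsum (\<lambda>x. vsum (f x) B) (insert a F) = add (vsum (f a) B) (vsum (\<lambda>x. vsum (f x) B) F)"
    using insert by (intro vsum_insert) auto
  also have "\<dots> = add (vsum (f a) B) (vsum (\<lambda>y. vsum (\<lambda>x. f x y) F) B)" using insert by simp
  also have "\<dots> = vsum (\<lambda>y. add (f a y) (vsum (\<lambda>x. f x y) F)) B"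
    using insert by (subst vsum_add) auto
  also have "\<dots> = vsum (\<lambda>y. vsum (\<lambda>x. f x y) (insert a F)) B"
  proof (rule vsum_cong)
    fix y assume y: "y \<in> B"
    show "add (f a y) (vsum (\<lambda>x. f x y) F) = vsum (\<lambda>x. f x y) (insert a F)"
      using insert y by (intro vsum_insert2[symmetric]) auto
  qed (use insert in auto)
  finally show ?case .
qed

lemma sm_sum_scalar: "finite A \<Longrightarrow> x \<in> carr \<Longrightarrow> sm (\<Sum>u\<in>A. c u) x = vsum (\<lambda>u. sm (c u) x) A"
proof (induction A rule: finite_induct)
  case (insert a F)
  then show ?case by (subst vsum_insert2) (auto simp: sm_add_scalar)
qed simp

end

locale leibniz_algebra = vspace +
  assumes leibniz_L: "leibniz L"
begin

abbreviation "br \<equiv> lbr L"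

lemma br_closed[simp, intro]: "x \<in> carr \<Longrightarrow> y \<in> carr \<Longrightarrow> br x y \<in> carr"
  using leibniz_L unfolding leibniz_def by auto
lemma br_add1: "x \<in> carr \<Longrightarrow> y \<in> carr \<Longrightarrow> z \<in> carr \<Longrightarrow> br (add x y) z = add (br x z) (br y z)"
  using leibniz_L unfolding leibniz_def by auto
lemma br_add2: "x \<in> carr \<Longrightarrow> y \<in> carr \<Longrightarrow> z \<in> carr \<Longrightarrow> br z (add x y) = add (br z x) (br z y)"
  using leibniz_L unfolding leibniz_def by auto
lemma br_sm1: "x \<in> carr \<Longrightarrow> y \<in> carr \<Longrightarrow> br (sm c x) y = sm c (br x y)"
  using leibniz_L unfolding leibniz_def by auto
lemma br_sm2: "x \<in> carr \<Longrightarrow> y \<in> carr \<Longrightarrow> br x (sm c y) = sm c (br x y)"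
  using leibniz_L unfolding leibniz_def by auto
lemma leibniz_identity: "x \<in> carr \<Longrightarrow> y \<in> carr \<Longrightarrow> z \<in> carr \<Longrightarrow> br x (br y z) = sub (br (br x y) z) (br (br x z) y)"
  using leibniz_L unfolding leibniz_def sub_def by auto

lemma br_zero1[simp]: "y \<in> carr \<Longrightarrow> br zer y = zer"
  using br_sm1[of zer y 0] by simp
lemma br_zero2[simp]: "y \<in> carr \<Longrightarrow> br y zer = zer"
  using br_sm2[of y zer 0] by simp

lemma br_sub1: "x \<in> carr \<Longrightarrow> y \<in> carr \<Longrightarrow> z \<in> carr \<Longrightarrow> br (sub x y) z = sub (br x z) (br y z)"
  unfolding sub_def by (simp add: br_add1 br_sm1)
lemma br_sub2: "x \<in> carr \<Longrightarrow> y \<in> carr \<Longrightarrow> z \<in> carr \<Longrightarrow> br z (sub x y) = sub (br z x) (br z y)"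
  unfolding sub_def by (simp add: br_add2 br_sm2)

lemma br_vsum1: "finite A \<Longrightarrow> (\<And>x. x \<in> A \<Longrightarrow> f x \<in> carr) \<Longrightarrow> y \<in> carr \<Longrightarrow>
   br (vsum f A) y = vsum (\<lambda>x. br (f x) y) A"
proof (induction A rule: finite_induct)
  case (insert a F)
  have "br (vsum f (insert a F)) y = br (add (f a) (vsum f F)) y" using insert by (subst vsum_insert2) auto
  also have "\<dots> = add (br (f a) y) (br (vsum f F) y)" using insert by (intro br_add1) auto
  also have "\<dots> = vsum (\<lambda>x. br (f x) y) (insert a F)" using insert by (subst vsum_insert2) auto
  finally show ?case .
qed simp

lemma br_vsum2: "finite A \<Longrightarrow> (\<And>x. x \<in> A \<Longrightarrow> f x \<in> carr) \<Longrightarrow> y \<in> carr \<Longrightarrow>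
   br y (vsum f A) = vsum (\<lambda>x. br y (f x)) A"
proof (induction A rule: finite_induct)
  case (insert a F)
  have "br y (vsum f (insert a F)) = br y (add (f a) (vsum f F))" using insert by (subst vsum_insert2) auto
  also have "\<dots> = add (br y (f a)) (br y (vsum f F))" using insert by (intro br_add2) auto
  also have "\<dots> = vsum (\<lambda>x. br y (f x)) (insert a F)" using insert by (subst vsum_insert2) auto
  finally show ?case .
qed simp

lemma lie_gens_carr: "A \<subseteq> carr \<Longrightarrow> B \<subseteq> carr \<Longrightarrow> {add (br m n) (br n m) | m n. m \<in> A \<and> n \<in> B} \<subseteq> carr"
  by (auto intro!: add_closed br_closed)

lemma lie_br_carr: "A \<subseteq> carr \<Longrightarrow> B \<subseteq> carr \<Longrightarrow> lie_br L A B \<subseteq> carr"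
  unfolding lie_br_def by (rule lspan_carr[OF lie_gens_carr])

lemma lie_br_subspace: "A \<subseteq> carr \<Longrightarrow> B \<subseteq> carr \<Longrightarrow> subspace L (lie_br L A B)"
  unfolding lie_br_def by (rule lspan_subspace[OF lie_gens_carr])

lemma lie_br_gen: "m \<in> A \<Longrightarrow> n \<in> B \<Longrightarrow> add (br m n) (br n m) \<in> lie_br L A B"
proof -
  assume "m \<in> A" "n \<in> B"
  then have "add (br m n) (br n m) \<in> {add (br m n) (br n m) | m n. m \<in> A \<and> n \<in> B}" by auto
  then show ?thesis unfolding lie_br_def by (rule subsetD[OF lspan_sub])
qed

lemma lie_br_min: "subspace L T \<Longrightarrow> (\<And>m n. m \<in> A \<Longrightarrow> n \<in> B \<Longrightarrow> add (br m n) (br n m) \<in> T) \<Longrightarrow>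
   lie_br L A B \<subseteq> T"
  unfolding lie_br_def by (rule lspan_min) (auto simp del: supp_iff)

lemma lie_br_mono: "A \<subseteq> carr \<Longrightarrow> B \<subseteq> carr \<Longrightarrow> A \<subseteq> A' \<Longrightarrow> B \<subseteq> B' \<Longrightarrow> A' \<subseteq> carr \<Longrightarrow> B' \<subseteq> carr \<Longrightarrow>
   lie_br L A B \<subseteq> lie_br L A' B'"
proof (rule lie_br_min)
  assume "A \<subseteq> carr" "B \<subseteq> carr" "A \<subseteq> A'" "B \<subseteq> B'" "A' \<subseteq> carr" "B' \<subseteq> carr"
  then show "subspace L (lie_br L A' B')" by (intro lie_br_subspace)
  fix m n assume "m \<in> A" "n \<in> B"
  then show "add (br m n) (br n m) \<in> lie_br L A' B'" using \<open>A \<subseteq> A'\<close> \<open>B \<subseteq> B'\<close> by (intro lie_br_gen) auto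
qed

lemma left_annihilator_subspace: "subspace L {y \<in> carr. \<forall>x\<in>carr. br x y = zer}"
  unfolding subspace_def by (auto simp: br_add2 br_sm2)

lemma br_lie_commutator_zero: "x \<in> carr \<Longrightarrow> y \<in> lie_br L carr carr \<Longrightarrow> br x y = zer"
proof -
  assume x: "x \<in> carr" and y: "y \<in> lie_br L carr carr"
  have "lie_br L carr carr \<subseteq> {y \<in> carr. \<forall>x\<in>carr. br x y = zer}"
  proof (rule lie_br_min[OF left_annihilator_subspace])
    fix m n assume mn: "m \<in> carr" "n \<in> carr"
    show "add (br m n) (br n m) \<in> {y \<in> carr. \<forall>x\<in>carr. br x y = zer}"
    proof (safe)
      fix x assume x: "x \<in> carr"
      have "br x (add (br m n) (br n m)) = add (br x (br m n)) (br x (br n m))"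
        using mn x by (simp add: br_add2)
      also have "\<dots> = add (sub (br (br x m) n) (br (br x n) m)) (sub (br (br x n) m) (br (br x m) n))"
        using mn x by (simp add: leibniz_identity)
      also have "\<dots> = zer"
      proof -
        have "sub (br (br x n) m) (br (br x m) n) = sm (-1) (sub (br (br x m) n) (br (br x n) m))"
          using mn x by (intro neg_sub) auto
        then show ?thesis using mn x by (simp add: add_neg)
      qed
      finally show "br x (add (br m n) (br n m)) = zer" .
    qed (use mn in auto)
  qed
  then show ?thesis using x y by auto
qed

context
  fixes I assumes I: "ideal L I"
begin

lemma I_subspace: "subspace L I" using I by (simp add: ideal_def)
lemma I_carr: "I \<subseteq> carr" using I_subspace subspace_sub_carr by blast

lemma coset_mem: "x \<in> carr \<Longrightarrow> w \<in> coset L I x \<longleftrightarrow> w \<in> carr \<and> sub w x \<in> I"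
proof -
  assume x: "x \<in> carr"
  have "w \<in> carr \<Longrightarrow> (\<exists>i\<in>I. w = add x i) \<longleftrightarrow> sub w x \<in> I"
  proof -
    assume w: "w \<in> carr"
    have "(\<exists>i\<in>I. w = add x i) \<longleftrightarrow> (\<exists>i\<in>I. i = sub w x)"
      using eq_add_iff[OF w x] I_carr by (intro bex_cong refl) auto
    then show ?thesis by simp
  qed
  then show ?thesis unfolding coset_def by blast
qed

lemma coset_self: "x \<in> carr \<Longrightarrow> x \<in> coset L I x"
proof -
  assume x: "x \<in> carr"
  show ?thesis unfolding coset_mem[OF x] using x subspace_zero[OF I_subspace] by simp
qed

lemma coset_eq: "x \<in> carr \<Longrightarrow> y \<in> carr \<Longrightarrow> coset L I x = coset L I y \<longleftrightarrow> sub x y \<in> I"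
proof
  assume x: "x \<in> carr" "y \<in> carr" "coset L I x = coset L I y"
  then have "x \<in> coset L I y" using coset_self by metis
  then show "sub x y \<in> I" using coset_mem[OF x(2)] by simp
next
  assume x: "x \<in> carr" "y \<in> carr" and d: "sub x y \<in> I"
  have d2: "sub y x \<in> I" using sub_sub_mem[OF I_subspace] x d by blast
  show "coset L I x = coset L I y"
  proof (rule set_eqI)
    fix w
    show "w \<in> coset L I x \<longleftrightarrow> w \<in> coset L I y"
    proof (cases "w \<in> carr")
      case True
      have e1: "sub w x = add (sub w y) (sub y x)" using sub_trans True x by blast
      have e2: "sub w y = add (sub w x) (sub x y)" using sub_trans True x by blast
      have "sub w x \<in> I \<longleftrightarrow> sub w y \<in> I"
      proof
        assume "sub w x \<in> I" then show "sub w y \<in> I" unfolding e2 using d by (rule subspace_add[OF I_subspace])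
      next
        assume "sub w y \<in> I" then show "sub w x \<in> I" unfolding e1 using d2 by (rule subspace_add[OF I_subspace])
      qed
      then show ?thesis using True by (simp add: coset_mem[OF x(1)] coset_mem[OF x(2)])
    next
      case False then show ?thesis by (simp add: coset_mem[OF x(1)] coset_mem[OF x(2)])
    qed
  qed
qed

lemma coset_some: "x \<in> carr \<Longrightarrow> (SOME w. w \<in> coset L I x) \<in> carr \<and> sub (SOME w. w \<in> coset L I x) x \<in> I"
proof -
  assume x: "x \<in> carr"
  have "(SOME w. w \<in> coset L I x) \<in> coset L I x" using coset_self[OF x] by (rule someI)
  then show ?thesis unfolding coset_mem[OF x] .
qed

lemma quot_add: "x \<in> carr \<Longrightarrow> y \<in> carr \<Longrightarrow> ladd (quot L I) (coset L I x) (coset L I y) = coset L I (add x y)"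
proof -
  assume x: "x \<in> carr" "y \<in> carr"
  define x' where "x' = (SOME w. w \<in> coset L I x)"
  define y' where "y' = (SOME w. w \<in> coset L I y)"
  have h: "x' \<in> carr" "sub x' x \<in> I" "y' \<in> carr" "sub y' y \<in> I"
    using coset_some[OF x(1)] coset_some[OF x(2)] unfolding x'_def y'_def by auto
  have "coset L I (add x' y') = coset L I (add x y)"
    using h x by (simp add: coset_eq sub_add_add subspace_add[OF I_subspace])
  then show ?thesis by (simp add: quot_def x'_def y'_def)
qed

lemma quot_sm: "x \<in> carr \<Longrightarrow> lsmult (quot L I) c (coset L I x) = coset L I (sm c x)"
proof -
  assume x: "x \<in> carr"
  define x' where "x' = (SOME w. w \<in> coset L I x)"
  have h: "x' \<in> carr" "sub x' x \<in> I" using coset_some[OF x] unfolding x'_def by auto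
  have "coset L I (sm c x') = coset L I (sm c x)"
    using h x by (simp add: coset_eq sub_sm subspace_sm[OF I_subspace])
  then show ?thesis by (simp add: quot_def x'_def)
qed

lemma quot_br: "x \<in> carr \<Longrightarrow> y \<in> carr \<Longrightarrow> lbr (quot L I) (coset L I x) (coset L I y) = coset L I (br x y)"
proof -
  assume x: "x \<in> carr" "y \<in> carr"
  define x' where "x' = (SOME w. w \<in> coset L I x)"
  define y' where "y' = (SOME w. w \<in> coset L I y)"
  have h: "x' \<in> carr" "sub x' x \<in> I" "y' \<in> carr" "sub y' y \<in> I"
    using coset_some[OF x(1)] coset_some[OF x(2)] unfolding x'_def y'_def by auto
  have e: "sub (br x' y') (br x y) = add (br (sub x' x) y') (br x (sub y' y))"
  proof -
    have "sub (br x' y') (br x y) = add (sub (br x' y') (br x y')) (sub (br x y') (br x y))"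
      using h x by (intro sub_trans) auto
    also have "sub (br x' y') (br x y') = br (sub x' x) y'" using h x by (simp add: br_sub1)
    also have "sub (br x y') (br x y) = br x (sub y' y)" using h x by (simp add: br_sub2)
    finally show ?thesis .
  qed
  have "br (sub x' x) y' \<in> I" "br x (sub y' y) \<in> I" using I h x unfolding ideal_def by auto
  then have "coset L I (br x' y') = coset L I (br x y)"
    using h x e by (simp add: coset_eq subspace_add[OF I_subspace])
  then show ?thesis by (simp add: quot_def x'_def y'_def)
qed

lemma quot_zero: "lzero (quot L I) = coset L I zer" by (simp add: quot_def)
lemma quot_carr: "lcarrier (quot L I) = coset L I ` carr" by (simp add: quot_def)

lemma quot_hom: "hom L (quot L I) (coset L I)"
  by (simp add: hom_def quot_add quot_sm quot_br quot_carr)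

lemma quot_ball: "(\<forall>X\<in>lcarrier (quot L I). P X) \<longleftrightarrow> (\<forall>x\<in>carr. P (coset L I x))"
  by (simp add: quot_carr)

lemma leibniz_quot: "leibniz (quot L I)"
  unfolding leibniz_def vector_space_on_def quot_ball
  by (simp add: quot_add quot_sm quot_br quot_zero quot_carr add_assoc add_neg
      sm_add_scalar sm_add_vec br_add1 br_add2 br_sm1 br_sm2 leibniz_identity sub_def)
     (metis add_comm)

end

end

lemma leibniz_vector_space_on: "leibniz L \<Longrightarrow> vector_space_on L"
  by (simp add: leibniz_def)

lemma leibniz_algebraI: "leibniz L \<Longrightarrow> leibniz_algebra L"
  by (simp add: leibniz_algebra_def vspace_def leibniz_algebra_axioms_def leibniz_def)

lemma leibniz_subalg:
  assumes L: "leibniz L" and S: "subspace L S" and cl: "\<And>x y. x \<in> S \<Longrightarrow> y \<in> S \<Longrightarrow> lbr L x y \<in> S"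
  shows "leibniz (subalg L S)"
proof -
  interpret leibniz_algebra L by (rule leibniz_algebraI[OF L])
  have S_carr: "\<And>x. x \<in> S \<Longrightarrow> x \<in> carr" using S by (auto simp: subspace_def)
  have Sc: "\<And>x y. x \<in> S \<Longrightarrow> y \<in> S \<Longrightarrow> add x y \<in> S" "\<And>x c. x \<in> S \<Longrightarrow> sm c x \<in> S" "zer \<in> S"
    using S by (auto simp: subspace_def)
  show ?thesis
    unfolding leibniz_def vector_space_on_def subalg_def
    by (simp add: Sc cl S_carr add_assoc add_neg sm_add_scalar sm_add_vec br_add1 br_add2 br_sm1 br_sm2
        leibniz_identity[unfolded sub_def]) (metis S_carr add_comm)
qed

lemma hom_comp: "hom L1 L2 f \<Longrightarrow> hom L2 L3 g \<Longrightarrow> hom L1 L3 (g \<circ> f)"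
  unfolding hom_def by auto

lemma subspace_equalizer:
  assumes L: "vector_space_on L" and H: "vector_space_on H"
    and h1: "hom L H f1" and h2: "hom L H f2"
  shows "subspace L {a \<in> lcarrier L. f1 a = f2 a}"
proof -
  interpret L: vspace L by (rule vspace.intro[OF L])
  interpret H: vspace H by (rule vspace.intro[OF H])
  have zero: "f L.zer = H.zer" if f: "hom L H f" for f
  proof -
    have "f (L.sm 0 L.zer) = H.sm 0 (f L.zer)" "f L.zer \<in> H.carr"
      using f L.zero_closed unfolding hom_def by blast+
    then show ?thesis by simp
  qed
  show ?thesis using zero[OF h1] zero[OF h2] h1 h2 unfolding subspace_def hom_def by auto
qed

locale leibniz_hom = P: leibniz_algebra L1 + Q: leibniz_algebra L2 for L1 :: "('k::field, 'a) leib" and L2 :: "('k, 'b) leib" +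
  fixes h :: "'a \<Rightarrow> 'b"
  assumes H: "hom L1 L2 h"
begin

lemma h_carr[simp, intro]: "x \<in> P.carr \<Longrightarrow> h x \<in> Q.carr" using H by (simp add: hom_def)
lemma h_add: "x \<in> P.carr \<Longrightarrow> y \<in> P.carr \<Longrightarrow> h (P.add x y) = Q.add (h x) (h y)" using H by (simp add: hom_def)
lemma h_sm: "x \<in> P.carr \<Longrightarrow> h (P.sm c x) = Q.sm c (h x)" using H by (simp add: hom_def)
lemma h_br: "x \<in> P.carr \<Longrightarrow> y \<in> P.carr \<Longrightarrow> h (P.br x y) = Q.br (h x) (h y)" using H by (simp add: hom_def)
lemma h_zero[simp]: "h P.zer = Q.zer"
  using h_sm[of P.zer 0] by simp
lemma h_sub: "x \<in> P.carr \<Longrightarrow> y \<in> P.carr \<Longrightarrow> h (P.sub x y) = Q.sub (h x) (h y)"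
  by (simp add: P.sub_def Q.sub_def h_add h_sm)

lemma preimage_subspace: "subspace L2 T \<Longrightarrow> subspace L1 {x \<in> P.carr. h x \<in> T}"
  unfolding subspace_def by (auto simp: h_add h_sm)

lemma image_subspace: "subspace L1 S \<Longrightarrow> subspace L2 (h ` S)"
proof -
  assume S: "subspace L1 S"
  have S_carr: "S \<subseteq> P.carr" using S by (simp add: subspace_def)
  have z: "Q.zer \<in> h ` S" using P.subspace_zero[OF S] h_zero by (metis image_eqI)
  have a: "Q.add x y \<in> h ` S" if xin: "x \<in> h ` S" and yin: "y \<in> h ` S" for x y
  proof -
    obtain x0 where x0: "x0 \<in> S" "x = h x0" using xin by blast
    obtain y0 where y0: "y0 \<in> S" "y = h y0" using yin by blast
    note xy = x0(1) y0(1) x0(2) y0(2)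
    have "P.add x0 y0 \<in> S" using P.subspace_add[OF S xy(1,2)] .
    moreover have "h (P.add x0 y0) = Q.add x y" using xy S_carr by (simp add: h_add subsetD)
    ultimately show ?thesis by (metis image_eqI)
  qed
  have m: "Q.sm c x \<in> h ` S" if xin: "x \<in> h ` S" for x c
  proof -
    obtain x0 where xy: "x0 \<in> S" "x = h x0" using xin by blast
    have "P.sm c x0 \<in> S" using P.subspace_sm[OF S xy(1)] .
    moreover have "h (P.sm c x0) = Q.sm c x" using xy S_carr by (simp add: h_sm subsetD)
    ultimately show ?thesis by (metis image_eqI)
  qed
  have "h ` S \<subseteq> Q.carr" using S_carr by auto
  then show ?thesis unfolding subspace_def using z a m by blast
qed

lemma image_lie_br_subset:
  assumes "A \<subseteq> P.carr" "B \<subseteq> P.carr" "h ` A \<subseteq> A'" "h ` B \<subseteq> B'" "A' \<subseteq> Q.carr" "B' \<subseteq> Q.carr"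
  shows "h ` lie_br L1 A B \<subseteq> lie_br L2 A' B'"
proof -
  have "lie_br L1 A B \<subseteq> {x \<in> P.carr. h x \<in> lie_br L2 A' B'}"
  proof (rule P.lie_br_min)
    show "subspace L1 {x \<in> P.carr. h x \<in> lie_br L2 A' B'}"
      using assms by (intro preimage_subspace Q.lie_br_subspace)
    fix m n assume mn: "m \<in> A" "n \<in> B"
    then have c: "m \<in> P.carr" "n \<in> P.carr" using assms by auto
    have "h (P.add (P.br m n) (P.br n m)) = Q.add (Q.br (h m) (h n)) (Q.br (h n) (h m))"
      using c by (simp add: h_add h_br)
    also have "\<dots> \<in> lie_br L2 A' B'" using mn assms by (intro Q.lie_br_gen) auto
    finally show "P.add (P.br m n) (P.br n m) \<in> {x \<in> P.carr. h x \<in> lie_br L2 A' B'}" using c by auto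
  qed
  then show ?thesis by auto
qed

lemma lie_br_subset_image:
  assumes "h ` P.carr = Q.carr"
  shows "lie_br L2 Q.carr Q.carr \<subseteq> h ` lie_br L1 P.carr P.carr"
proof (rule Q.lie_br_min)
  show "subspace L2 (h ` lie_br L1 P.carr P.carr)"
    by (intro image_subspace P.lie_br_subspace) auto
  fix m n assume mn: "m \<in> Q.carr" "n \<in> Q.carr"
  then obtain m0 n0 where c: "m0 \<in> P.carr" "n0 \<in> P.carr" "m = h m0" "n = h n0" using assms by (metis imageE)
  have "Q.add (Q.br m n) (Q.br n m) = h (P.add (P.br m0 n0) (P.br n0 m0))"
    using c by (simp add: h_add h_br)
  moreover have "P.add (P.br m0 n0) (P.br n0 m0) \<in> lie_br L1 P.carr P.carr" using c by (intro P.lie_br_gen)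
  ultimately show "Q.add (Q.br m n) (Q.br n m) \<in> h ` lie_br L1 P.carr P.carr" by auto
qed

lemma preimage_ideal: "ideal L2 T \<Longrightarrow> ideal L1 {x \<in> P.carr. h x \<in> T}"
proof -
  assume T: "ideal L2 T"
  have s: "subspace L1 {x \<in> P.carr. h x \<in> T}" using T by (intro preimage_subspace) (simp add: ideal_def)
  have b: "P.br x i \<in> {x \<in> P.carr. h x \<in> T} \<and> P.br i x \<in> {x \<in> P.carr. h x \<in> T}"
    if "x \<in> P.carr" "i \<in> {x \<in> P.carr. h x \<in> T}" for x i
  proof -
    have "h x \<in> Q.carr" "h i \<in> T" "i \<in> P.carr" using that by auto
    then have "Q.br (h x) (h i) \<in> T" "Q.br (h i) (h x) \<in> T" using T unfolding ideal_def by blast+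
    then show ?thesis using that by (simp add: h_br)
  qed
  show ?thesis unfolding ideal_def using s b by blast
qed

lemma kernel_ideal: "ideal L1 {x \<in> P.carr. h x = Q.zer}"
proof -
  have "ideal L2 {Q.zer}" unfolding ideal_def subspace_def by auto
  from preimage_ideal[OF this] show ?thesis by simp
qed

end

section \<open>The free Leibniz algebra\<close>

lemma free_carr: "lcarrier (free_leib X) = {a. finsupp a \<and> (\<forall>w\<in>supp a. w \<noteq> [] \<and> set w \<subseteq> X)}"
  by (simp add: free_leib_def)
lemma free_add: "ladd (free_leib X) = (\<lambda>a b. a + b)" by (simp add: free_leib_def fun_eq_iff)
lemma free_sm: "lsmult (free_leib X) = (\<lambda>c a w. c * a w)" by (simp add: free_leib_def)
lemma free_zero: "lzero (free_leib X) = 0" by (simp add: free_leib_def fun_eq_iff)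

lemma free_leib_single_word: "w \<noteq> [] \<Longrightarrow> set w \<subseteq> X \<Longrightarrow> single_word w \<in> lcarrier (free_leib X)"
  by (simp add: free_carr supp_single)

lemma free_leib_generator: "x \<in> X \<Longrightarrow> single_word [x] \<in> lcarrier (free_leib X)"
  by (simp add: free_leib_single_word)

lemma free_carr_reduced: "a \<in> lcarrier (free_leib X) \<Longrightarrow> reduced a"
  by (auto simp: free_carr reduced_def)

lemma fbr_carr: fixes a b :: "'x list \<Rightarrow> 'k::field" assumes "a \<in> lcarrier (free_leib X)" "b \<in> lcarrier (free_leib X)"
  shows "fbr a b \<in> lcarrier (free_leib X)"
proof -
  have f: "finsupp (fbr a b)" using assms by (intro finsupp_fbr) (auto simp: free_carr)
  have "w \<noteq> [] \<and> set w \<subseteq> X" if w: "w \<in> supp (fbr a b)" for w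
  proof -
    obtain u v where uv: "u \<in> supp a" "v \<in> supp b" "w \<in> supp (wbr u v :: _ \<Rightarrow> 'k)"
      using supp_fbr[of a b] w by blast
    have "length w = length u + length v \<and> set w \<subseteq> set u \<union> set v" using wbr_supp[OF uv(3)] .
    moreover have "v \<noteq> []" "set u \<subseteq> X" "set v \<subseteq> X" using uv(1,2) assms by (auto simp: free_carr simp del: supp_iff)
    ultimately show ?thesis by auto
  qed
  then show ?thesis using f by (simp add: free_carr del: supp_iff)
qed

lemma leibniz_free: "leibniz (free_leib X :: ('k::field, 'x list \<Rightarrow> 'k) leib)"
proof -
  let ?C = "lcarrier (free_leib X :: ('k, 'x list \<Rightarrow> 'k) leib)"
  have finsupp: "a \<in> ?C \<Longrightarrow> finsupp a" for a by (simp add: free_carr)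
  have addc: "a \<in> ?C \<Longrightarrow> b \<in> ?C \<Longrightarrow> a + b \<in> ?C" for a b
    using supp_add[of a b] by (auto simp: free_carr finsupp_add simp del: supp_iff)
  have smc: "a \<in> ?C \<Longrightarrow> (\<lambda>w. c * a w) \<in> ?C" for a c
    using supp_smult[of c a] by (auto simp: free_carr finsupp_smult simp del: supp_iff)
  have zc: "(0::_ \<Rightarrow> 'k) \<in> ?C" by (simp add: free_carr)
  have vs: "vector_space_on (free_leib X :: ('k, 'x list \<Rightarrow> 'k) leib)"
    unfolding vector_space_on_def free_add free_sm free_zero
    using addc smc zc by (auto simp: algebra_simps fun_eq_iff)
  have l: "fbr x (fbr y z) = (\<lambda>w. fbr (fbr x y) z w + (-1) * fbr (fbr x z) y w)"
    if "x \<in> ?C" "y \<in> ?C" "z \<in> ?C" for x y z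
    using fbr_leibniz[OF finsupp[OF that(1)] free_carr_reduced[OF that(2)] free_carr_reduced[OF that(3)]]
    by (simp add: fun_eq_iff)
  show ?thesis
    unfolding leibniz_def lbr_free_leib free_add free_sm
    using vs fbr_carr l finsupp
    by (auto simp: fbr_add1 fbr_add2 fbr_smult1 fbr_smult2)
qed

section \<open>Universal property of the free Leibniz algebra\<close>

text \<open>\<open>eval_word H e [x\<^sub>1, \<dots>, x\<^sub>n]\<close> is the left-normed bracket
  \<open>[\<dots>[[e x\<^sub>1, e x\<^sub>2], e x\<^sub>3] \<dots>, e x\<^sub>n]\<close>.\<close>

fun eval_word_rev :: "('k, 'b) leib \<Rightarrow> ('x \<Rightarrow> 'b) \<Rightarrow> 'x list \<Rightarrow> 'b" where
  "eval_word_rev H e [] = lzero H"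
| "eval_word_rev H e [x] = e x"
| "eval_word_rev H e (v # y # ys) = lbr H (eval_word_rev H e (y # ys)) (e v)"

definition eval_word :: "('k, 'b) leib \<Rightarrow> ('x \<Rightarrow> 'b) \<Rightarrow> 'x list \<Rightarrow> 'b" where
  "eval_word H e w = eval_word_rev H e (rev w)"

lemma eval_word_single[simp]: "eval_word H e [v] = e v" by (simp add: eval_word_def)
lemma eval_word_snoc: "w \<noteq> [] \<Longrightarrow> eval_word H e (w @ [v]) = lbr H (eval_word H e w) (e v)"
  by (cases "rev w") (auto simp: eval_word_def)

context leibniz_algebra
begin

context
  fixes e :: "'x \<Rightarrow> _"
  assumes e: "\<And>x. e x \<in> carr"
begin

lemma eval_word_carr[simp, intro]: "eval_word L e w \<in> carr"
proof (induction w rule: rev_induct)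
  case Nil then show ?case by (simp add: eval_word_def)
next
  case (snoc x xs) then show ?case using e by (cases "xs = []") (auto simp: eval_word_snoc)
qed

definition free_ext :: "('x list \<Rightarrow> 'a) \<Rightarrow> 'b" where
  "free_ext a = vsum (\<lambda>w. sm (a w) (eval_word L e w)) (supp a)"

lemma free_ext_superset: "finite S \<Longrightarrow> supp a \<subseteq> S \<Longrightarrow> free_ext a = vsum (\<lambda>w. sm (a w) (eval_word L e w)) S"
  unfolding free_ext_def by (rule vsum_superset) auto

lemma free_ext_carr[simp, intro]: "finsupp a \<Longrightarrow> free_ext a \<in> carr"
  unfolding free_ext_def by (rule vsum_closed2) auto

lemma free_ext_add: "finsupp a \<Longrightarrow> finsupp b \<Longrightarrow> free_ext (a + b) = add (free_ext a) (free_ext b)"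
proof -
  assume f: "finsupp a" "finsupp b"
  let ?S = "supp a \<union> supp b"
  have "free_ext (a + b) = vsum (\<lambda>w. sm ((a + b) w) (eval_word L e w)) ?S"
    using f supp_add by (intro free_ext_superset) auto
  also have "\<dots> = vsum (\<lambda>w. add (sm (a w) (eval_word L e w)) (sm (b w) (eval_word L e w))) ?S"
    using f by (intro vsum_cong) (auto simp: sm_add_scalar)
  also have "\<dots> = add (vsum (\<lambda>w. sm (a w) (eval_word L e w)) ?S) (vsum (\<lambda>w. sm (b w) (eval_word L e w)) ?S)"
    using f by (intro vsum_add) auto
  also have "\<dots> = add (free_ext a) (free_ext b)" using f by (simp add: free_ext_superset[of ?S])
  finally show ?thesis .
qed

lemma free_ext_sm: "finsupp a \<Longrightarrow> free_ext (\<lambda>w. c * a w) = sm c (free_ext a)"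
proof -
  assume f: "finsupp a"
  have "free_ext (\<lambda>w. c * a w) = vsum (\<lambda>w. sm (c * a w) (eval_word L e w)) (supp a)"
    using f supp_smult by (intro free_ext_superset) auto
  also have "\<dots> = vsum (\<lambda>w. sm c (sm (a w) (eval_word L e w))) (supp a)"
    using f by (intro vsum_cong) auto
  also have "\<dots> = sm c (free_ext a)" unfolding free_ext_def using f by (intro vsum_sm[symmetric]) auto
  finally show ?thesis .
qed

lemma free_ext_diff: "finsupp a \<Longrightarrow> finsupp b \<Longrightarrow> free_ext (a - b) = sub (free_ext a) (free_ext b)"
proof -
  assume f: "finsupp a" "finsupp b"
  have "a - b = a + (\<lambda>w. (-1) * b w)" by (simp add: fun_eq_iff)
  then have "free_ext (a - b) = add (free_ext a) (free_ext (\<lambda>w. (-1) * b w))"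
    by (simp only:) (rule free_ext_add[OF f(1) finsupp_smult[OF f(2)]])
  also have "free_ext (\<lambda>w. (-1) * b w) = sm (-1) (free_ext b)" by (rule free_ext_sm[OF f(2)])
  finally show ?thesis unfolding sub_def .
qed

lemma free_ext_single: "free_ext (single_word w) = eval_word L e w"
  unfolding free_ext_def supp_single using vsum_insert2[of "{}" w "\<lambda>wa. sm (single_word w wa) (eval_word L e wa)"]
  by (simp add: single_word_def)

lemma free_ext_lincomb:
  assumes a: "finsupp a" and F: "\<And>u. u \<in> supp a \<Longrightarrow> finsupp (F u)"
  shows "free_ext (lincomb a F) = vsum (\<lambda>u. sm (a u) (free_ext (F u))) (supp a)"
proof -
  let ?V = "\<Union>u\<in>supp a. supp (F u)"
  have fV: "finite ?V" using a F by auto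
  have "free_ext (lincomb a F) = vsum (\<lambda>w. sm (lincomb a F w) (eval_word L e w)) ?V"
    using fV supp_lincomb by (intro free_ext_superset) auto
  also have "\<dots> = vsum (\<lambda>w. vsum (\<lambda>u. sm (a u * F u w) (eval_word L e w)) (supp a)) ?V"
    using fV a by (intro vsum_cong) (auto simp: lincomb_def sm_sum_scalar)
  also have "\<dots> = vsum (\<lambda>u. vsum (\<lambda>w. sm (a u * F u w) (eval_word L e w)) ?V) (supp a)"
    using fV a by (intro vsum_swap) auto
  also have "\<dots> = vsum (\<lambda>u. sm (a u) (vsum (\<lambda>w. sm (F u w) (eval_word L e w)) ?V)) (supp a)"
  proof (rule vsum_cong)
    fix u assume u: "u \<in> supp a"
    have "vsum (\<lambda>w. sm (a u * F u w) (eval_word L e w)) ?V = vsum (\<lambda>w. sm (a u) (sm (F u w) (eval_word L e w))) ?V"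
      using fV by (intro vsum_cong) auto
    also have "\<dots> = sm (a u) (vsum (\<lambda>w. sm (F u w) (eval_word L e w)) ?V)"
      using fV by (intro vsum_sm[symmetric]) auto
    finally show "vsum (\<lambda>w. sm (a u * F u w) (eval_word L e w)) ?V = sm (a u) (vsum (\<lambda>w. sm (F u w) (eval_word L e w)) ?V)" .
  qed (use a fV in auto)
  also have "\<dots> = vsum (\<lambda>u. sm (a u) (free_ext (F u))) (supp a)"
  proof (rule vsum_cong)
    fix u assume u: "u \<in> supp a"
    have "free_ext (F u) = vsum (\<lambda>w. sm (F u w) (eval_word L e w)) ?V" using fV u by (intro free_ext_superset) auto
    then show "sm (a u) (vsum (\<lambda>w. sm (F u w) (eval_word L e w)) ?V) = sm (a u) (free_ext (F u))" by simp
  qed (use a fV in auto)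
  finally show ?thesis .
qed

lemma free_ext_append_letter:
  assumes c: "reduced c"
  shows "free_ext (append_letter v c) = br (free_ext c) (e v)"
proof -
  have fc: "finsupp c" and ne: "\<And>w. w \<in> supp c \<Longrightarrow> w \<noteq> []" using c by (auto simp: reduced_def)
  have "free_ext (append_letter v c) = free_ext (lincomb c (\<lambda>w. single_word (w @ [v])))"
    using fc by (simp add: append_letter_lincomb)
  also have "\<dots> = vsum (\<lambda>w. sm (c w) (eval_word L e (w @ [v]))) (supp c)"
    using fc by (simp add: free_ext_lincomb finsupp_single free_ext_single)
  also have "\<dots> = vsum (\<lambda>w. br (sm (c w) (eval_word L e w)) (e v)) (supp c)"
    using fc ne e by (intro vsum_cong) (auto simp: eval_word_snoc br_sm1)
  also have "\<dots> = br (free_ext c) (e v)"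
    unfolding free_ext_def using fc e by (intro br_vsum1[symmetric]) auto
  finally show ?thesis .
qed

lemma free_ext_wbr: "v \<noteq> [] \<Longrightarrow> u \<noteq> [] \<Longrightarrow> free_ext (wbr u v) = br (eval_word L e u) (eval_word L e v)"
proof (induction v arbitrary: u rule: rev_induct)
  case Nil then show ?case by simp
next
  case (snoc x v0)
  show ?case
  proof (cases "v0 = []")
    case True
    then show ?thesis using snoc.prems by (simp add: wbr_letter free_ext_single eval_word_snoc)
  next
    case False
    have "free_ext (wbr u (v0 @ [x])) = free_ext (append_letter x (wbr u v0) - wbr (u @ [x]) v0)"
      by (simp add: wbr_snoc[OF False])
    also have "\<dots> = sub (free_ext (append_letter x (wbr u v0))) (free_ext (wbr (u @ [x]) v0))"
      using reduced_wbr[OF False, of u, where 'k='a] by (intro free_ext_diff) (auto simp: append_letter_lincomb finsupp_wbr reduced_def intro!: finsupp_lincomb finsupp_single)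
    also have "free_ext (append_letter x (wbr u v0)) = br (br (eval_word L e u) (eval_word L e v0)) (e x)"
      using reduced_wbr[OF False, of u, where 'k='a] snoc.IH[OF False snoc.prems(2)] by (simp add: free_ext_append_letter)
    also have "free_ext (wbr (u @ [x]) v0) = br (br (eval_word L e u) (e x)) (eval_word L e v0)"
      using snoc.IH[OF False] snoc.prems by (simp add: eval_word_snoc)
    also have "sub (br (br (eval_word L e u) (eval_word L e v0)) (e x)) (br (br (eval_word L e u) (e x)) (eval_word L e v0))
        = br (eval_word L e u) (br (eval_word L e v0) (e x))" using e by (simp add: leibniz_identity)
    also have "\<dots> = br (eval_word L e u) (eval_word L e (v0 @ [x]))" using False by (simp add: eval_word_snoc)
    finally show ?thesis .
  qed
qed

lemma free_ext_fbr:
  assumes a: "reduced a" and b: "reduced b"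
  shows "free_ext (fbr a b) = br (free_ext a) (free_ext b)"
proof -
  have fa: "finsupp a" and fb: "finsupp b" and na: "\<And>u. u \<in> supp a \<Longrightarrow> u \<noteq> []" and nb: "\<And>u. u \<in> supp b \<Longrightarrow> u \<noteq> []"
    using a b by (auto simp: reduced_def)
  have "free_ext (fbr a b) = vsum (\<lambda>u. sm (a u) (free_ext (lincomb b (wbr u)))) (supp a)"
    unfolding fbr_def using fa fb by (intro free_ext_lincomb) (auto intro!: finsupp_lincomb finsupp_wbr)
  also have "\<dots> = vsum (\<lambda>u. sm (a u) (vsum (\<lambda>v. sm (b v) (br (eval_word L e u) (eval_word L e v))) (supp b))) (supp a)"
  proof (rule vsum_cong)
    fix u assume u: "u \<in> supp a"
    have "free_ext (lincomb b (wbr u)) = vsum (\<lambda>v. sm (b v) (free_ext (wbr u v))) (supp b)"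
      using fb by (intro free_ext_lincomb) (auto intro: finsupp_wbr)
    also have "\<dots> = vsum (\<lambda>v. sm (b v) (br (eval_word L e u) (eval_word L e v))) (supp b)"
      using fb u na nb by (intro vsum_cong) (auto simp: free_ext_wbr)
    finally show "sm (a u) (free_ext (lincomb b (wbr u))) = sm (a u) (vsum (\<lambda>v. sm (b v) (br (eval_word L e u) (eval_word L e v))) (supp b))"
      by simp
  qed (use fa fb in \<open>auto intro!: finsupp_lincomb finsupp_wbr\<close>)
  also have "\<dots> = br (free_ext a) (free_ext b)"
  proof -
    have "br (free_ext a) (free_ext b) = vsum (\<lambda>u. br (sm (a u) (eval_word L e u)) (free_ext b)) (supp a)"
      unfolding free_ext_def[of a] using fa fb by (intro br_vsum1) auto
    also have "\<dots> = vsum (\<lambda>u. sm (a u) (vsum (\<lambda>v. sm (b v) (br (eval_word L e u) (eval_word L e v))) (supp b))) (supp a)"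
    proof (rule vsum_cong)
      fix u assume u: "u \<in> supp a"
      have "br (sm (a u) (eval_word L e u)) (free_ext b) = sm (a u) (br (eval_word L e u) (free_ext b))" using fb by (simp add: br_sm1)
      also have "br (eval_word L e u) (free_ext b) = vsum (\<lambda>v. br (eval_word L e u) (sm (b v) (eval_word L e v))) (supp b)"
        unfolding free_ext_def[of b] using fb by (intro br_vsum2) auto
      also have "\<dots> = vsum (\<lambda>v. sm (b v) (br (eval_word L e u) (eval_word L e v))) (supp b)"
        using fb by (intro vsum_cong) (auto simp: br_sm2)
      finally show "br (sm (a u) (eval_word L e u)) (free_ext b) = sm (a u) (vsum (\<lambda>v. sm (b v) (br (eval_word L e u) (eval_word L e v))) (supp b))" .
    qed (use fa fb in auto)
    finally show ?thesis by simp
  qed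
  finally show ?thesis .
qed

lemma free_ext_hom: "hom (free_leib X) L free_ext"
  unfolding hom_def lbr_free_leib free_add free_sm
  by (auto simp: free_carr_reduced[THEN reduced_finsupp] free_ext_add free_ext_sm free_ext_fbr free_carr_reduced)

end
end

lemma free_leib_universal:
  assumes H: "leibniz H" and e: "\<And>x. x \<in> X \<Longrightarrow> e x \<in> lcarrier H"
  shows "\<exists>f. hom (free_leib X) H f \<and> (\<forall>x\<in>X. f (single_word [x]) = e x)"
proof -
  interpret leibniz_algebra H by (rule leibniz_algebraI[OF H])
  define e' where "e' x = (if x \<in> X then e x else zer)" for x
  have e': "\<And>x. e' x \<in> carr" using e by (simp add: e'_def)
  have "hom (free_leib X) H (free_ext e')" by (rule free_ext_hom[OF e'])
  moreover have "\<forall>x\<in>X. free_ext e' (single_word [x]) = e x"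
    by (simp add: free_ext_single[OF e'] e'_def)
  ultimately show ?thesis by blast
qed

lemma single_word_snoc: "single_word (w @ [x]) = lbr (free_leib X) (single_word w) (single_word [x])"
  by (simp add: lbr_free_leib fbr_single1 lincomb_single wbr_letter)

lemma free_leib_hom_eq_on_words:
  assumes h1: "hom (free_leib X) H f1" and h2: "hom (free_leib X) H f2"
    and gen: "\<And>x. x \<in> X \<Longrightarrow> f1 (single_word [x]) = f2 (single_word [x])"
  shows "w \<noteq> [] \<Longrightarrow> set w \<subseteq> X \<Longrightarrow> f1 (single_word w) = f2 (single_word w)"
proof (induction w rule: rev_induct)
  case (snoc x w)
  show ?case
  proof (cases "w = []")
    case True then show ?thesis using snoc.prems gen by simp
  next
    case False
    have c: "single_word w \<in> lcarrier (free_leib X)" "single_word [x] \<in> lcarrier (free_leib X)"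
      using snoc.prems False by (auto intro!: free_leib_single_word)
    have e: "single_word (w @ [x]) = lbr (free_leib X) (single_word w) (single_word [x])"
      by (rule single_word_snoc)
    have "f1 (single_word (w @ [x])) = lbr H (f1 (single_word w)) (f1 (single_word [x]))"
      unfolding e using h1 c unfolding hom_def by blast
    also have "\<dots> = lbr H (f2 (single_word w)) (f2 (single_word [x]))"
      using snoc.IH[OF False] snoc.prems gen by simp
    also have "\<dots> = f2 (single_word (w @ [x]))"
      unfolding e using h2 c unfolding hom_def by (metis (no_types, lifting))
    finally show ?thesis .
  qed
qed simp

lemma subspace_free_leib_words:
  fixes T :: "('x list \<Rightarrow> 'k::field) set"
  assumes T: "subspace (free_leib X) T"
    and words: "\<And>w. w \<noteq> [] \<Longrightarrow> set w \<subseteq> X \<Longrightarrow> single_word w \<in> T"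
  shows "lcarrier (free_leib X) \<subseteq> T"
proof -
  have "finite W \<Longrightarrow> \<forall>a\<in>lcarrier (free_leib X). supp a \<subseteq> W \<longrightarrow> a \<in> T" for W
  proof (induction W rule: finite_induct)
    case empty
    have "a = lzero (free_leib X)" if "supp a \<subseteq> {}" for a :: "'x list \<Rightarrow> 'k"
      using that by (auto simp: free_zero fun_eq_iff)
    then show ?case using T by (auto simp: subspace_def)
  next
    case (insert w W)
    show ?case
    proof (intro ballI impI)
      fix a :: "'x list \<Rightarrow> 'k" assume a: "a \<in> lcarrier (free_leib X)" "supp a \<subseteq> insert w W"
      define a' :: "'x list \<Rightarrow> 'k" where "a' = (\<lambda>v. if v = w then 0 else a v)"
      have a'_carr: "a' \<in> lcarrier (free_leib X)" using a
        by (auto simp: free_carr a'_def supp_def elim!: finite_subset[rotated])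
      have "supp a' \<subseteq> W" using a(2) by (auto simp: a'_def split: if_splits)
      then have "a' \<in> T" using insert.IH a'_carr by blast
      moreover have "lsmult (free_leib X) (a w) (single_word w) \<in> T"
      proof (cases "a w = 0")
        case True
        have "lsmult (free_leib X) 0 (single_word w :: 'x list \<Rightarrow> 'k) = lzero (free_leib X)"
          by (simp add: free_leib_def)
        then show ?thesis using T True by (simp add: subspace_def)
      next
        case False then show ?thesis using T a words by (auto simp: subspace_def free_carr)
      qed
      moreover have "a = ladd (free_leib X) a' (lsmult (free_leib X) (a w) (single_word w))"
        by (auto simp: a'_def free_add free_sm fun_eq_iff single_word_def)
      ultimately show "a \<in> T" using T by (metis subspace_def)
    qed
  qed
  then show ?thesis by (auto simp: free_carr)
qed

lemma free_leib_hom_eqI: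
  assumes H: "vector_space_on H" and h1: "hom (free_leib X) H f1" and h2: "hom (free_leib X) H f2"
    and gen: "\<And>x. x \<in> X \<Longrightarrow> f1 (single_word [x]) = f2 (single_word [x])"
    and a: "a \<in> lcarrier (free_leib X)"
  shows "f1 a = f2 a"
proof -
  have "lcarrier (free_leib X) \<subseteq> {a \<in> lcarrier (free_leib X). f1 a = f2 a}"
    using free_leib_hom_eq_on_words[OF h1 h2 gen] free_leib_single_word
    by (intro subspace_free_leib_words subspace_equalizer[OF _ H h1 h2]
        leibniz_vector_space_on[OF leibniz_free]) auto
  then show ?thesis using a by auto
qed

lemma hom_id: "hom L L id" unfolding hom_def by auto

lemma free_leib_hom_onto:
  assumes L: "leibniz L" and psi: "hom L (free_leib Y) psi"
    and gen: "\<And>y. y \<in> Y \<Longrightarrow> single_word [y] \<in> psi ` lcarrier L"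
  shows "psi ` lcarrier L = lcarrier (free_leib Y)"
proof
  show "psi ` lcarrier L \<subseteq> lcarrier (free_leib Y)" using psi by (auto simp: hom_def)
  define e where "e y = (SOME x. x \<in> lcarrier L \<and> psi x = single_word [y])" for y
  have e: "e y \<in> lcarrier L \<and> psi (e y) = single_word [y]" if y: "y \<in> Y" for y
  proof -
    obtain x where "x \<in> lcarrier L" "psi x = single_word [y]" using gen[OF y] by force
    then show ?thesis unfolding e_def by (intro someI[where P = "\<lambda>x. x \<in> lcarrier L \<and> psi x = _"]) simp
  qed
  obtain sig where sig: "hom (free_leib Y) L sig" "\<forall>y\<in>Y. sig (single_word [y]) = e y"
    using free_leib_universal[OF L, of Y e] e by blast
  have "psi (sig a) = a" if a: "a \<in> lcarrier (free_leib Y)" for a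
  proof -
    have "(psi \<circ> sig) a = id a"
    proof (rule free_leib_hom_eqI[OF _ _ _ _ a])
      show "vector_space_on (free_leib Y)" by (rule leibniz_vector_space_on[OF leibniz_free])
      show "hom (free_leib Y) (free_leib Y) (psi \<circ> sig)" by (rule hom_comp[OF sig(1) psi])
      show "hom (free_leib Y) (free_leib Y) id" by (rule hom_id)
      show "(psi \<circ> sig) (single_word [y]) = id (single_word [y])" if "y \<in> Y" for y
        using sig(2) e that by simp
    qed
    then show ?thesis by simp
  qed
  moreover have "sig a \<in> lcarrier L" if "a \<in> lcarrier (free_leib Y)" for a
    using sig(1) that by (simp add: hom_def)
  ultimately show "lcarrier (free_leib Y) \<subseteq> psi ` lcarrier L" by (metis image_eqI subsetI)
qed

section \<open>Subalgebras inside the Lie commutator\<close>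

context leibniz_algebra
begin

lemma subspace_Int: "subspace L S1 \<Longrightarrow> subspace L S2 \<Longrightarrow> subspace L (S1 \<inter> S2)"
  unfolding subspace_def by auto

lemma subspace_subalg: "subspace L I \<Longrightarrow> I \<subseteq> S \<Longrightarrow> subspace (subalg L S) I"
  unfolding subspace_def subalg_def by auto

lemma lie_br_carr_subspace: "subspace L (lie_br L carr carr)"
  by (rule lie_br_subspace) auto

lemma lie_br_ideal_subset:
  assumes r: "ideal L r"
  shows "lie_br L carr r \<subseteq> r \<inter> lie_br L carr carr"
proof -
  have r_carr: "r \<subseteq> carr" using r by (simp add: ideal_def subspace_def)
  have "lie_br L carr r \<subseteq> r"
  proof (rule lie_br_min)
    show "subspace L r" using r by (simp add: ideal_def)
    fix m n assume "m \<in> carr" "n \<in> r"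
    then show "add (br m n) (br n m) \<in> r" using r unfolding ideal_def by (auto intro: subspace_add)
  qed
  moreover have "lie_br L carr r \<subseteq> lie_br L carr carr" using r_carr by (intro lie_br_mono) auto
  ultimately show ?thesis by auto
qed

lemma leibniz_subalg_Int_lie_br:
  assumes s: "ideal L s"
  shows "leibniz (subalg L (s \<inter> lie_br L carr carr))"
proof (rule leibniz_subalg[OF leibniz_L])
  show Ss: "subspace L (s \<inter> lie_br L carr carr)"
    using s lie_br_carr_subspace by (intro subspace_Int) (simp_all add: ideal_def)
  fix x y assume "x \<in> s \<inter> lie_br L carr carr" "y \<in> s \<inter> lie_br L carr carr"
  then have "br x y = zer" using lie_br_carr[of carr carr] by (intro br_lie_commutator_zero) auto
  then show "br x y \<in> s \<inter> lie_br L carr carr" using subspace_zero[OF Ss] by simp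
qed

lemma ideal_lie_br_subalg:
  assumes r: "ideal L r" and s: "ideal L s" and r_subset_s: "r \<subseteq> s"
  shows "ideal (subalg L (s \<inter> lie_br L carr carr)) (lie_br L carr r)"
  unfolding ideal_def
proof (intro conjI ballI)
  have r_carr: "r \<subseteq> carr" using r by (simp add: ideal_def subspace_def)
  have J: "lie_br L carr r \<subseteq> r \<inter> lie_br L carr carr" by (rule lie_br_ideal_subset[OF r])
  have Js: "subspace L (lie_br L carr r)" using r_carr by (intro lie_br_subspace) auto
  show "subspace (subalg L (s \<inter> lie_br L carr carr)) (lie_br L carr r)"
    using Js J r_subset_s by (intro subspace_subalg) auto
  fix x i assume x: "x \<in> lcarrier (subalg L (s \<inter> lie_br L carr carr))" and i: "i \<in> lie_br L carr r"
  have "x \<in> carr" "i \<in> carr" "i \<in> lie_br L carr carr"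
    using x i J r_carr s lie_br_carr[of carr carr] by (auto simp: subalg_def)
  moreover have "x \<in> lie_br L carr carr" using x by (simp add: subalg_def)
  ultimately have "br x i = zer" "br i x = zer" by (auto intro: br_lie_commutator_zero)
  then show "lbr (subalg L (s \<inter> lie_br L carr carr)) x i \<in> lie_br L carr r"
    "lbr (subalg L (s \<inter> lie_br L carr carr)) i x \<in> lie_br L carr r"
    using subspace_zero[OF Js] by (auto simp: subalg_def)
qed

end

lemma subalg_simps[simp]:
  "lcarrier (subalg L S) = S" "ladd (subalg L S) = ladd L" "lsmult (subalg L S) = lsmult L"
  "lbr (subalg L S) = lbr L" "lzero (subalg L S) = lzero L"
  by (simp_all add: subalg_def)

section \<open>The Schur Lie-multiplier of a presentation\<close>

definition schur_lie_pres :: "('k::field, 'x) leib \<Rightarrow> ('k, 'a) leib \<Rightarrow> ('x \<Rightarrow> 'a) \<Rightarrow> ('k, 'x set) leib" where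
  "schur_lie_pres f g c =
     (let r = {a \<in> lcarrier f. c a = lzero g}
      in quot (subalg f (r \<inter> lie_br f (lcarrier f) (lcarrier f))) (lie_br f (lcarrier f) r))"

lemma schur_lie_eq_schur_lie_pres: "schur_lie g = schur_lie_pres (free_leib (lcarrier g)) g (canon_pres g)"
  by (simp add: schur_lie_def schur_lie_pres_def Let_def)

text \<open>\<open>q\<close> and \<open>m\<close> are the algebra and ideal of the theorem; the presentation need not be free.\<close>

locale presentation = leibniz_hom f g c for f :: "('k::field, 'x) leib" and g :: "('k, 'a) leib" and c +
  fixes b assumes b: "ideal g b" and surj: "c ` P.carr = Q.carr"
begin

definition "r = {a \<in> P.carr. c a = Q.zer}"
definition "s = {a \<in> P.carr. c a \<in> b}"
definition "LF = lie_br f P.carr P.carr"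
definition "J = lie_br f P.carr r"
definition "S = s \<inter> LF"
definition "A = subalg f S"
definition "q = quot A J"
definition "m = coset A J ` (r \<inter> LF)"

lemma r_ideal: "ideal f r" unfolding r_def by (rule kernel_ideal)
lemma s_ideal: "ideal f s" unfolding s_def by (rule preimage_ideal[OF b])
lemma b_carr: "b \<subseteq> Q.carr" using b by (simp add: ideal_def subspace_def)
lemma r_subset_s: "r \<subseteq> s" unfolding r_def s_def using b by (auto simp: ideal_def subspace_def)
lemma r_carr: "r \<subseteq> P.carr" unfolding r_def by auto
lemma s_carr: "s \<subseteq> P.carr" unfolding s_def by auto
lemma LF_carr: "LF \<subseteq> P.carr" unfolding LF_def by (rule P.lie_br_carr) auto
lemma S_carr: "S \<subseteq> P.carr" unfolding S_def using s_carr by auto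
lemma rLF_subset_S: "r \<inter> LF \<subseteq> S" unfolding S_def using r_subset_s by auto

lemma S_subspace: "subspace f S" unfolding S_def LF_def
  using s_ideal by (intro P.subspace_Int P.lie_br_subspace) (auto simp: ideal_def)
lemma r_subspace: "subspace f r" using r_ideal by (simp add: ideal_def)
lemma rLF_subspace: "subspace f (r \<inter> LF)"
  unfolding LF_def using r_subspace by (intro P.subspace_Int P.lie_br_subspace) auto

lemma A_leib: "leibniz A" unfolding A_def S_def LF_def by (rule P.leibniz_subalg_Int_lie_br[OF s_ideal])
lemma J_sub: "J \<subseteq> r \<inter> LF" unfolding J_def LF_def by (rule P.lie_br_ideal_subset[OF r_ideal])
lemma J_ideal: "ideal A J" unfolding A_def S_def LF_def J_def by (rule P.ideal_lie_br_subalg[OF r_ideal s_ideal r_subset_s])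

sublocale AA: leibniz_algebra A by (rule leibniz_algebraI[OF A_leib])

lemma AA_simps[simp]: "AA.carr = S" "AA.add = P.add" "AA.sm = P.sm" "AA.br = P.br" "AA.zer = P.zer"
  by (simp_all add: A_def)

lemma AA_sub[simp]: "AA.sub = P.sub" by (simp add: fun_eq_iff AA.sub_def P.sub_def)

lemma q_leib: "leibniz q" unfolding q_def by (rule AA.leibniz_quot[OF J_ideal])

sublocale QQ: leibniz_algebra q by (rule leibniz_algebraI[OF q_leib])

abbreviation "cJ \<equiv> coset A J"

lemma q_carr: "QQ.carr = cJ ` S" unfolding q_def using AA.quot_carr[OF J_ideal] by simp
lemma q_add: "x \<in> S \<Longrightarrow> y \<in> S \<Longrightarrow> QQ.add (cJ x) (cJ y) = cJ (P.add x y)"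
  unfolding q_def using AA.quot_add[OF J_ideal] by simp
lemma q_sm: "x \<in> S \<Longrightarrow> QQ.sm k (cJ x) = cJ (P.sm k x)"
  unfolding q_def using AA.quot_sm[OF J_ideal] by simp
lemma q_br: "x \<in> S \<Longrightarrow> y \<in> S \<Longrightarrow> QQ.br (cJ x) (cJ y) = cJ (P.br x y)"
  unfolding q_def using AA.quot_br[OF J_ideal] by simp
lemma q_zero: "QQ.zer = cJ P.zer" unfolding q_def using AA.quot_zero[OF J_ideal] by simp
lemma q_sub: "x \<in> S \<Longrightarrow> y \<in> S \<Longrightarrow> QQ.sub (cJ x) (cJ y) = cJ (P.sub x y)"
proof -
  assume xy: "x \<in> S" "y \<in> S"
  have "P.sm (-1) y \<in> S" using P.subspace_sm[OF S_subspace xy(2)] .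
  then show ?thesis using xy by (simp add: QQ.sub_def P.sub_def q_sm q_add)
qed

lemma S_LF: "y \<in> S \<Longrightarrow> y \<in> LF" by (simp add: S_def)

lemma br_S_zero: "x \<in> P.carr \<Longrightarrow> y \<in> S \<Longrightarrow> P.br x y = P.zer"
  using S_LF unfolding LF_def by (intro P.br_lie_commutator_zero) auto

lemma q_br_zero: "X \<in> QQ.carr \<Longrightarrow> Y \<in> QQ.carr \<Longrightarrow> QQ.br X Y = QQ.zer"
proof -
  assume "X \<in> QQ.carr" "Y \<in> QQ.carr"
  then obtain x y where xy: "x \<in> S" "y \<in> S" "X = cJ x" "Y = cJ y" unfolding q_carr by blast
  then show ?thesis using S_carr by (simp add: q_br q_zero br_S_zero subsetD)
qed

lemma cJ_in_m: "y \<in> S \<Longrightarrow> cJ y \<in> m \<longleftrightarrow> y \<in> r"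
proof
  assume y: "y \<in> S" and "cJ y \<in> m"
  then obtain z where z: "z \<in> r \<inter> LF" "cJ y = cJ z" unfolding m_def by blast
  have zS: "z \<in> S" using z rLF_subset_S by auto
  have "P.sub y z \<in> J" using z y zS AA.coset_eq[OF J_ideal, of y z] by simp
  then have "P.sub y z \<in> r" using J_sub by auto
  then have "P.add (P.sub y z) z \<in> r" using z P.subspace_add[OF r_subspace] by auto
  then show "y \<in> r" using y zS S_carr by (simp add: P.add_sub_cancel subsetD)
next
  assume "y \<in> S" "y \<in> r"
  then show "cJ y \<in> m" unfolding m_def using S_LF by auto
qed

lemma m_ideal: "ideal q m"
proof -
  interpret cJ: leibniz_hom A q cJ
    by (intro leibniz_hom.intro leibniz_hom_axioms.intro AA.leibniz_algebra_axioms
        QQ.leibniz_algebra_axioms) (simp add: q_def AA.quot_hom[OF J_ideal])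
  have m: "subspace q m" unfolding m_def
    by (rule cJ.image_subspace) (use P.subspace_subalg[OF rLF_subspace rLF_subset_S] in \<open>simp add: A_def\<close>)
  have "QQ.br X I \<in> m \<and> QQ.br I X \<in> m" if "X \<in> QQ.carr" "I \<in> m" for X I
    using that q_br_zero QQ.subspace_zero[OF m] QQ.subspace_sub_carr[OF m] by auto
  then show ?thesis using m by (auto simp: ideal_def)
qed

sublocale QM: leibniz_algebra "quot q m" by (rule leibniz_algebraI[OF QQ.leibniz_quot[OF m_ideal]])

lemma coset_m_eq_iff: "y1 \<in> S \<Longrightarrow> y2 \<in> S \<Longrightarrow> coset q m (cJ y1) = coset q m (cJ y2) \<longleftrightarrow> c y1 = c y2"
proof -
  assume y: "y1 \<in> S" "y2 \<in> S"
  have yC: "y1 \<in> P.carr" "y2 \<in> P.carr" using y S_carr by auto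
  have cq: "cJ y1 \<in> QQ.carr" "cJ y2 \<in> QQ.carr" using y unfolding q_carr by auto
  have dS: "P.sub y1 y2 \<in> S" using y by (rule P.subspace_sub[OF S_subspace])
  have "coset q m (cJ y1) = coset q m (cJ y2) \<longleftrightarrow> QQ.sub (cJ y1) (cJ y2) \<in> m"
    using cq by (rule QQ.coset_eq[OF m_ideal])
  also have "\<dots> \<longleftrightarrow> P.sub y1 y2 \<in> r" using y dS by (simp add: q_sub cJ_in_m)
  also have "\<dots> \<longleftrightarrow> Q.sub (c y1) (c y2) = Q.zer" using dS S_carr yC by (auto simp: r_def h_sub)
  also have "\<dots> \<longleftrightarrow> c y1 = c y2" using yC by (simp add: Q.sub_eq_zero_iff)
  finally show ?thesis .
qed

definition "T = lie_br g Q.carr Q.carr \<inter> b"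

lemma c_S: "y \<in> S \<Longrightarrow> c y \<in> T"
  using image_lie_br_subset[of P.carr P.carr Q.carr Q.carr] unfolding S_def s_def T_def LF_def by auto

lemma T_lift: "t \<in> T \<Longrightarrow> \<exists>y\<in>S. c y = t"
proof -
  assume t: "t \<in> T"
  then obtain y where y: "y \<in> LF" "c y = t" using lie_br_subset_image[OF surj] unfolding T_def LF_def by blast
  then have "y \<in> s" using t LF_carr unfolding s_def T_def by auto
  then show ?thesis using y unfolding S_def by auto
qed

definition "to_quot t = coset q m (cJ (SOME y. y \<in> S \<and> c y = t))"

lemma to_quot_coset: "y \<in> S \<Longrightarrow> to_quot (c y) = coset q m (cJ y)"
proof -
  assume y: "y \<in> S"
  define y' where "y' = (SOME y'. y' \<in> S \<and> c y' = c y)"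
  have "y' \<in> S \<and> c y' = c y" unfolding y'_def by (rule someI[of _ y]) (simp add: y)
  then show ?thesis unfolding to_quot_def y'_def[symmetric] using y by (simp add: coset_m_eq_iff)
qed

lemma to_quot_hom: "hom (subalg g T) (quot q m) to_quot"
  unfolding hom_def subalg_simps
proof (intro conjI ballI allI)
  fix t assume "t \<in> T"
  then obtain y where y: "y \<in> S" "t = c y" using T_lift by metis
  show "to_quot t \<in> QM.carr" using y by (simp add: to_quot_coset QQ.quot_carr[OF m_ideal] q_carr)
next
  fix t1 t2 assume "t1 \<in> T" "t2 \<in> T"
  then obtain y1 y2 where y: "y1 \<in> S" "t1 = c y1" "y2 \<in> S" "t2 = c y2" using T_lift by metis
  have yC: "y1 \<in> P.carr" "y2 \<in> P.carr" using y S_carr by auto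
  have cq: "cJ y1 \<in> QQ.carr" "cJ y2 \<in> QQ.carr" using y by (auto simp: q_carr)
  have aS: "P.add y1 y2 \<in> S" using y by (intro P.subspace_add[OF S_subspace])
  have "to_quot (Q.add t1 t2) = coset q m (cJ (P.add y1 y2))"
    using y yC aS by (simp add: h_add[symmetric] to_quot_coset)
  also have "\<dots> = ladd (quot q m) (to_quot t1) (to_quot t2)"
    using y cq by (simp add: to_quot_coset QQ.quot_add[OF m_ideal] q_add)
  finally show "to_quot (Q.add t1 t2) = ladd (quot q m) (to_quot t1) (to_quot t2)" .
  have zS: "P.zer \<in> S" by (rule P.subspace_zero[OF S_subspace])
  have "to_quot (Q.br t1 t2) = coset q m (cJ P.zer)"
    using y yC to_quot_coset[OF zS] by (simp add: h_br[symmetric] br_S_zero)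
  also have "\<dots> = lbr (quot q m) (to_quot t1) (to_quot t2)"
    using y cq by (simp add: to_quot_coset QQ.quot_br[OF m_ideal] q_br_zero q_zero)
  finally show "to_quot (Q.br t1 t2) = lbr (quot q m) (to_quot t1) (to_quot t2)" .
next
  fix k t assume "t \<in> T"
  then obtain y where y: "y \<in> S" "t = c y" using T_lift by metis
  have "P.sm k y \<in> S" using y by (intro P.subspace_sm[OF S_subspace])
  then show "to_quot (Q.sm k t) = lsmult (quot q m) k (to_quot t)"
    using y S_carr by (auto simp: h_sm[symmetric] to_quot_coset QQ.quot_sm[OF m_ideal] q_carr q_sm)
qed

lemma to_quot_bij: "bij_betw to_quot T (lcarrier (quot q m))"
proof (rule bij_betw_imageI)
  show "inj_on to_quot T"
  proof (rule inj_onI)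
    fix t1 t2 assume "t1 \<in> T" "t2 \<in> T" "to_quot t1 = to_quot t2"
    then obtain y1 y2 where "y1 \<in> S" "t1 = c y1" "y2 \<in> S" "t2 = c y2" "to_quot t1 = to_quot t2"
      using T_lift by metis
    then show "t1 = t2" by (simp add: to_quot_coset coset_m_eq_iff)
  qed
  have "to_quot ` T = to_quot ` c ` S" using T_lift c_S by (auto simp: image_iff) metis
  also have "\<dots> = lcarrier (quot q m)"
    by (force simp: image_image to_quot_coset QQ.quot_carr[OF m_ideal] q_carr cong: image_cong)
  finally show "to_quot ` T = lcarrier (quot q m)" .
qed

theorem isomorphic_T_quot: "isomorphic (subalg g T) (quot q m)"
  unfolding isomorphic_def using to_quot_hom to_quot_bij by auto

definition "B = subalg f (r \<inter> LF)"

lemma schur_lie_pres_eq: "schur_lie_pres f g c = quot B J"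
  by (simp add: schur_lie_pres_def Let_def B_def J_def r_def LF_def)

lemma B_leib: "leibniz B" unfolding B_def LF_def by (rule P.leibniz_subalg_Int_lie_br[OF r_ideal])
lemma J_idealB: "ideal B J" unfolding B_def LF_def J_def by (rule P.ideal_lie_br_subalg[OF r_ideal r_ideal subset_refl])

sublocale BB: leibniz_algebra B by (rule leibniz_algebraI[OF B_leib])

lemma BB_simps[simp]: "BB.carr = r \<inter> LF" "BB.add = P.add" "BB.sm = P.sm" "BB.br = P.br" "BB.zer = P.zer"
  by (simp_all add: B_def)

lemma coset_A_eq_coset_B: "z \<in> r \<Longrightarrow> cJ z = coset B J z"
proof -
  assume z: "z \<in> r"
  have "y \<in> S \<longleftrightarrow> y \<in> r \<inter> LF" if "i \<in> J" "y = P.add z i" for y i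
  proof -
    have "i \<in> r" using that J_sub by auto
    then have "y \<in> r" using that z P.subspace_add[OF r_subspace] by auto
    then show ?thesis using r_subset_s unfolding S_def by auto
  qed
  then show ?thesis unfolding coset_def A_def B_def by auto
qed

text \<open>On \<open>r \<inter> LF\<close> the cosets of \<open>J\<close> in \<open>A\<close> and in \<open>B\<close> agree, so \<open>m\<close> is literally the
  carrier of the multiplier and the identity is an isomorphism.\<close>

theorem isomorphic_m_schur_lie_pres: "isomorphic (subalg q m) (schur_lie_pres f g c)"
  unfolding isomorphic_def schur_lie_pres_eq
proof (intro exI conjI)
  have carrB: "lcarrier (quot B J) = m"
    unfolding BB.quot_carr[OF J_idealB] BB_simps m_def using coset_A_eq_coset_B by auto
  have mr: "X \<in> m \<Longrightarrow> \<exists>x. x \<in> r \<inter> LF \<and> x \<in> S \<and> X = cJ x \<and> X = coset B J x" for X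
    unfolding m_def using coset_A_eq_coset_B rLF_subset_S by auto
  show "bij_betw id (lcarrier (subalg q m)) (lcarrier (quot B J))" using carrB by simp
  show "hom (subalg q m) (quot B J) id"
    unfolding hom_def subalg_simps carrB
  proof (intro conjI ballI allI)
    fix X Y assume "X \<in> m" "Y \<in> m"
    then obtain x y where x: "x \<in> r \<inter> LF" "x \<in> S" "X = cJ x" "X = coset B J x"
      and y: "y \<in> r \<inter> LF" "y \<in> S" "Y = cJ y" "Y = coset B J y" using mr by metis
    have a1: "P.add x y \<in> r" using x y P.subspace_add[OF r_subspace] by auto
    have b1: "P.br x y \<in> r" using x y r_ideal r_carr unfolding ideal_def by auto
    have "QQ.add X Y = cJ (P.add x y)" using x y by (simp add: q_add)
    also have "\<dots> = coset B J (P.add x y)" using a1 by (rule coset_A_eq_coset_B)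
    also have "\<dots> = ladd (quot B J) X Y" using x(1,4) y(1,4) by (simp add: BB.quot_add[OF J_idealB])
    finally show "id (QQ.add X Y) = ladd (quot B J) (id X) (id Y)" by simp
    have "QQ.br X Y = cJ (P.br x y)" using x y by (simp add: q_br)
    also have "\<dots> = coset B J (P.br x y)" using b1 by (rule coset_A_eq_coset_B)
    also have "\<dots> = lbr (quot B J) X Y" using x(1,4) y(1,4) by (simp add: BB.quot_br[OF J_idealB])
    finally show "id (QQ.br X Y) = lbr (quot B J) (id X) (id Y)" by simp
  next
    fix k X assume "X \<in> m"
    then obtain x where x: "x \<in> r \<inter> LF" "x \<in> S" "X = cJ x" "X = coset B J x" using mr by metis
    have a1: "P.sm k x \<in> r" using x P.subspace_sm[OF r_subspace] by auto
    have "QQ.sm k X = cJ (P.sm k x)" using x by (simp add: q_sm)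
    also have "\<dots> = coset B J (P.sm k x)" using a1 by (rule coset_A_eq_coset_B)
    also have "\<dots> = lsmult (quot B J) k X" using x(1,4) by (simp add: BB.quot_sm[OF J_idealB])
    finally show "id (QQ.sm k X) = lsmult (quot B J) k (id X)" by simp
  next
    fix X assume "X \<in> m" then show "id X \<in> m" by simp
  qed
qed

end

locale presentation_lift = presentation f g c b + F2: leibniz_algebra f2 +
  C2: leibniz_hom f2 "quot g b" c2 + Psi: leibniz_hom f f2 psi
  for f :: "('k::field, 'x) leib" and g :: "('k, 'a) leib" and c b
    and f2 :: "('k, 'y) leib" and c2 :: "'y \<Rightarrow> 'a set" and psi :: "'x \<Rightarrow> 'y" +
  assumes psi_onto: "psi ` P.carr = F2.carr"
    and psi_compat: "\<And>a. a \<in> P.carr \<Longrightarrow> c2 (psi a) = coset g b (c a)"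
begin

definition "r2 = {a \<in> F2.carr. c2 a = C2.Q.zer}"
definition "LF2 = lie_br f2 F2.carr F2.carr"
definition "J2 = lie_br f2 F2.carr r2"
definition "B2 = subalg f2 (r2 \<inter> LF2)"

lemma schur_lie_pres2_eq: "schur_lie_pres f2 (quot g b) c2 = quot B2 J2"
  by (simp add: schur_lie_pres_def Let_def B2_def J2_def r2_def LF2_def)

lemma r2_ideal: "ideal f2 r2" unfolding r2_def by (rule C2.kernel_ideal)
lemma r2_carr: "r2 \<subseteq> F2.carr" unfolding r2_def by auto

lemma B2_leib: "leibniz B2" unfolding B2_def LF2_def by (rule F2.leibniz_subalg_Int_lie_br[OF r2_ideal])
lemma J2_ideal: "ideal B2 J2"
  unfolding B2_def LF2_def J2_def by (rule F2.ideal_lie_br_subalg[OF r2_ideal r2_ideal subset_refl])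

sublocale BB2: leibniz_algebra B2 by (rule leibniz_algebraI[OF B2_leib])

lemma BB2_simps[simp]:
  "BB2.carr = r2 \<inter> LF2" "BB2.add = F2.add" "BB2.sm = F2.sm" "BB2.br = F2.br" "BB2.zer = F2.zer"
  by (simp_all add: B2_def)

lemma BB2_sub[simp]: "BB2.sub = F2.sub" by (simp add: fun_eq_iff BB2.sub_def F2.sub_def)

lemma psi_s: "a \<in> s \<Longrightarrow> psi a \<in> r2"
proof -
  assume "a \<in> s"
  then have a: "a \<in> P.carr" "c a \<in> b" unfolding s_def by auto
  have "coset g b (c a) = coset g b Q.zer" using a b_carr by (subst Q.coset_eq[OF b]) auto
  then have "c2 (psi a) = C2.Q.zer" using psi_compat[OF a(1)] by (simp add: Q.quot_zero[OF b])
  then show ?thesis unfolding r2_def using a by auto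
qed

lemma psi_S: "y \<in> S \<Longrightarrow> psi y \<in> r2 \<inter> LF2"
  using psi_s Psi.image_lie_br_subset[of P.carr P.carr F2.carr F2.carr] unfolding S_def LF_def LF2_def by auto

lemma psi_J: "psi ` J \<subseteq> J2"
  unfolding J_def J2_def using r_carr r2_carr psi_s r_subset_s by (intro Psi.image_lie_br_subset) auto

definition "induced X = coset B2 J2 (psi (SOME x. x \<in> X))"

lemma induced_coset: "y \<in> S \<Longrightarrow> induced (cJ y) = coset B2 J2 (psi y)"
proof -
  assume y: "y \<in> S"
  define x where "x = (SOME x. x \<in> cJ y)"
  have x: "x \<in> S" "P.sub x y \<in> J" using AA.coset_some[OF J_ideal, of y] y unfolding x_def by auto
  have "psi (P.sub x y) \<in> J2" using x psi_J by auto
  then have "F2.sub (psi x) (psi y) \<in> J2" using x y S_carr by (simp add: Psi.h_sub subsetD)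
  then have "coset B2 J2 (psi x) = coset B2 J2 (psi y)"
    using psi_S[OF x(1)] psi_S[OF y] by (subst BB2.coset_eq[OF J2_ideal]) auto
  then show ?thesis unfolding induced_def x_def by simp
qed

lemma induced_hom: "hom q (quot B2 J2) induced"
  unfolding hom_def q_carr ball_simps
proof (intro conjI ballI allI)
  fix x assume x: "x \<in> S"
  show "induced (cJ x) \<in> lcarrier (quot B2 J2)"
    using psi_S[OF x] by (simp add: induced_coset[OF x] BB2.quot_carr[OF J2_ideal])
  fix y assume y: "y \<in> S"
  have xyC: "x \<in> P.carr" "y \<in> P.carr" using x y S_carr by auto
  have aS: "P.add x y \<in> S" using x y by (intro P.subspace_add[OF S_subspace])
  show "induced (QQ.add (cJ x) (cJ y)) = ladd (quot B2 J2) (induced (cJ x)) (induced (cJ y))"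
    using x y aS xyC psi_S[OF x] psi_S[OF y]
    by (simp add: q_add induced_coset Psi.h_add BB2.quot_add[OF J2_ideal])
  have bS: "P.br x y \<in> S" using x y xyC br_S_zero P.subspace_zero[OF S_subspace] by simp
  show "induced (QQ.br (cJ x) (cJ y)) = lbr (quot B2 J2) (induced (cJ x)) (induced (cJ y))"
    using x y bS xyC psi_S[OF x] psi_S[OF y]
    by (simp add: q_br induced_coset Psi.h_br BB2.quot_br[OF J2_ideal])
next
  fix k x assume x: "x \<in> S"
  have "P.sm k x \<in> S" using x by (intro P.subspace_sm[OF S_subspace])
  then show "induced (QQ.sm k (cJ x)) = lsmult (quot B2 J2) k (induced (cJ x))"
    using x S_carr psi_S[OF x] by (simp add: q_sm induced_coset Psi.h_sm BB2.quot_sm[OF J2_ideal] subsetD)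
qed

text \<open>Surjectivity needs \<open>psi\<close> to map \<open>[f,f]\<^sub>L\<^sub>i\<^sub>e\<close> onto \<open>[f2,f2]\<^sub>L\<^sub>i\<^sub>e\<close>; an element of it
  in the kernel of \<open>c2\<close> then lifts into \<open>S\<close>.\<close>

lemma induced_onto: "induced ` QQ.carr = lcarrier (quot B2 J2)"
proof
  show "induced ` QQ.carr \<subseteq> lcarrier (quot B2 J2)" using induced_hom unfolding hom_def by auto
  show "lcarrier (quot B2 J2) \<subseteq> induced ` QQ.carr"
  proof
    fix Z assume "Z \<in> lcarrier (quot B2 J2)"
    then obtain z where z: "z \<in> r2" "z \<in> LF2" "Z = coset B2 J2 z"
      by (auto simp: BB2.quot_carr[OF J2_ideal])
    obtain y where y: "y \<in> LF" "psi y = z"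
      using z(2) Psi.lie_br_subset_image[OF psi_onto] unfolding LF_def LF2_def by blast
    have yC: "y \<in> P.carr" using y LF_carr by auto
    have "coset g b (c y) = coset g b Q.zer"
      using psi_compat[OF yC] y(2) z(1) by (simp add: r2_def Q.quot_zero[OF b])
    then have "c y \<in> b" using yC by (subst (asm) Q.coset_eq[OF b]) auto
    then have yS: "y \<in> S" unfolding S_def s_def using yC y(1) by auto
    then have "induced (cJ y) = Z" using induced_coset y(2) z(3) by simp
    moreover have "cJ y \<in> QQ.carr" using yS unfolding q_carr by auto
    ultimately show "Z \<in> induced ` QQ.carr" by blast
  qed
qed

theorem schur_lie_pres_epimorphic_image: "epimorphic_image (schur_lie_pres f2 (quot g b) c2) q"
  unfolding epimorphic_image_def schur_lie_pres2_eq using induced_hom induced_onto by blast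

end

lemma canon_pres:
  assumes "leibniz g"
  shows "hom (free_leib (lcarrier g)) g (canon_pres g) \<and> (\<forall>x\<in>lcarrier g. canon_pres g (single_word [x]) = x)"
proof -
  have "\<exists>\<phi>. hom (free_leib (lcarrier g)) g \<phi> \<and> (\<forall>x\<in>lcarrier g. \<phi> (single_word [x]) = x)"
    using free_leib_universal[OF assms, of "lcarrier g" id] by simp
  then show ?thesis unfolding canon_pres_def by (rule someI_ex)
qed

lemma canon_pres_onto:
  assumes "leibniz g"
  shows "canon_pres g ` lcarrier (free_leib (lcarrier g)) = lcarrier g"
proof
  show "canon_pres g ` lcarrier (free_leib (lcarrier g)) \<subseteq> lcarrier g"
    using canon_pres[OF assms] by (auto simp: hom_def)
  show "lcarrier g \<subseteq> canon_pres g ` lcarrier (free_leib (lcarrier g))"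
    using canon_pres[OF assms] free_leib_generator by (metis image_eqI subsetI)
qed

lemma canon_pres_lift:
  fixes g :: "('k::field, 'a) leib"
  assumes g: "leibniz g" and b: "ideal g b"
  obtains psi :: "('a list \<Rightarrow> 'k) \<Rightarrow> 'a set list \<Rightarrow> 'k" where "hom (free_leib (lcarrier g)) (free_leib (lcarrier (quot g b))) psi"
    and "psi ` lcarrier (free_leib (lcarrier g)) = lcarrier (free_leib (lcarrier (quot g b)))"
    and "\<And>a. a \<in> lcarrier (free_leib (lcarrier g)) \<Longrightarrow>
           canon_pres (quot g b) (psi a) = coset g b (canon_pres g a)"
proof -
  interpret G: leibniz_algebra g by (rule leibniz_algebraI[OF g])
  have gb: "leibniz (quot g b)" by (rule G.leibniz_quot[OF b])
  have gen: "single_word [coset g b x] \<in> lcarrier (free_leib (lcarrier (quot g b)) :: ('k, _) leib)"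
    if "x \<in> lcarrier g" for x
    using that by (intro free_leib_generator) (simp add: G.quot_carr[OF b])
  have "\<exists>psi :: ('a list \<Rightarrow> 'k) \<Rightarrow> 'a set list \<Rightarrow> 'k.
      hom (free_leib (lcarrier g)) (free_leib (lcarrier (quot g b))) psi \<and>
      (\<forall>x\<in>lcarrier g. psi (single_word [x]) = single_word [coset g b x])"
    by (rule free_leib_universal[OF leibniz_free gen])
  then obtain psi :: "('a list \<Rightarrow> 'k) \<Rightarrow> 'a set list \<Rightarrow> 'k"
    where psi: "hom (free_leib (lcarrier g)) (free_leib (lcarrier (quot g b))) psi"
    and psi_gen: "\<forall>x\<in>lcarrier g. psi (single_word [x]) = single_word [coset g b x]"
    by blast
  have "psi ` lcarrier (free_leib (lcarrier g)) = lcarrier (free_leib (lcarrier (quot g b)))"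
  proof (rule free_leib_hom_onto[OF leibniz_free psi])
    fix X assume "X \<in> lcarrier (quot g b)"
    then obtain x where x: "x \<in> lcarrier g" "X = coset g b x" by (auto simp: G.quot_carr[OF b])
    then have "psi (single_word [x]) = single_word [X]" using psi_gen by simp
    then show "single_word [X] \<in> psi ` lcarrier (free_leib (lcarrier g))"
      using free_leib_generator[OF x(1)] by (metis image_eqI)
  qed
  moreover have "(canon_pres (quot g b) \<circ> psi) a = (coset g b \<circ> canon_pres g) a"
    if a: "a \<in> lcarrier (free_leib (lcarrier g))" for a
  proof (rule free_leib_hom_eqI[OF leibniz_vector_space_on[OF gb] _ _ _ a])
    show "hom (free_leib (lcarrier g)) (quot g b) (canon_pres (quot g b) \<circ> psi)"
      using psi canon_pres[OF gb] by (blast intro: hom_comp)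
    show "hom (free_leib (lcarrier g)) (quot g b) (coset g b \<circ> canon_pres g)"
      using canon_pres[OF g] G.quot_hom[OF b] by (blast intro: hom_comp)
    fix x assume "x \<in> lcarrier g"
    then show "(canon_pres (quot g b) \<circ> psi) (single_word [x]) = (coset g b \<circ> canon_pres g) (single_word [x])"
      using psi_gen canon_pres[OF gb] canon_pres[OF g] by (simp add: G.quot_carr[OF b])
  qed
  ultimately show thesis using psi that by simp
qed

theorem mainTheorem3:
  fixes g :: "('k::field, 'a) leib" and b :: "'a set"
  assumes "(2::'k) \<noteq> 0"
    and "leibniz g"
    and "ideal g b"
  shows "\<exists>(q :: ('k, ('a list \<Rightarrow> 'k) set) leib) m.
           leibniz q \<and> ideal q m \<and>
           isomorphic (subalg g (lie_br g (lcarrier g) (lcarrier g) \<inter> b)) (quot q m) \<and>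
           isomorphic (subalg q m) (schur_lie g) \<and>
           epimorphic_image (schur_lie (quot g b)) q"
proof -
  note g = assms(2) and b = assms(3)
  interpret G: leibniz_algebra g by (rule leibniz_algebraI[OF g])
  interpret P: presentation "free_leib (lcarrier g)" g "canon_pres g" b
    using canon_pres[OF g] canon_pres_onto[OF g]
    by (intro presentation.intro leibniz_hom.intro presentation_axioms.intro leibniz_hom_axioms.intro
        leibniz_algebraI leibniz_free g b) auto
  obtain psi :: "('a list \<Rightarrow> 'k) \<Rightarrow> 'a set list \<Rightarrow> 'k"
    where psi: "hom (free_leib (lcarrier g)) (free_leib (lcarrier (quot g b))) psi"
    "psi ` lcarrier (free_leib (lcarrier g)) = lcarrier (free_leib (lcarrier (quot g b)))"
    "\<And>a. a \<in> lcarrier (free_leib (lcarrier g)) \<Longrightarrow>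
       canon_pres (quot g b) (psi a) = coset g b (canon_pres g a)"
    by (rule canon_pres_lift[OF g b]) auto
  interpret PL: presentation_lift "free_leib (lcarrier g)" g "canon_pres g" b
    "free_leib (lcarrier (quot g b))" "canon_pres (quot g b)" psi
    using psi canon_pres[OF G.leibniz_quot[OF b]]
    by unfold_locales (auto intro: leibniz_vector_space_on leibniz_free G.leibniz_quot[OF b])
  show ?thesis
  proof (intro exI conjI)
    show "leibniz P.q" by (rule P.q_leib)
    show "ideal P.q P.m" by (rule P.m_ideal)
    show "isomorphic (subalg g (lie_br g (lcarrier g) (lcarrier g) \<inter> b)) (quot P.q P.m)"
      using P.isomorphic_T_quot unfolding P.T_def .
    show "isomorphic (subalg P.q P.m) (schur_lie g)"
      using P.isomorphic_m_schur_lie_pres unfolding schur_lie_eq_schur_lie_pres .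
    show "epimorphic_image (schur_lie (quot g b)) P.q"
      using PL.schur_lie_pres_epimorphic_image unfolding schur_lie_eq_schur_lie_pres .
  qed
qed

end
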